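(* Let $\mathbf{k}=(k_1,\ldots,k_n)$ be an admissible index and $\beta\in\mathbb{C}$ with $\mathrm{Re}\,\beta>0$. Let $D(\beta)=\{\alpha\in\mathbb{C}:|\alpha-\beta|<\mathrm{Re}\,\beta/2\}$. Then the series \[ \sum_{l=0}^{\infty}(\alpha-\beta)^l\sum_{i=0}^{l}\sum_{\substack{i_1+\cdots+i_{n-1}=i\\ i_j\in\mathbb{Z}_{\ge0}}}S_{l-i}(k_1,\{1\}^{i_1},k_2,\ldots,k_{n-1},\{1\}^{i_{n-1}},k_n;\alpha) \] and \[ \sum_{l=0}^{\infty}(\alpha-\beta)^l\sum_{i=0}^{l}\sum_{\mathbf{i}^{(1)}_{k_1-1}+\cdots+\mathbf{i}^{(n)}_{k_n-2}=i}S_{l-i}\bigl(k_1+\mathbf{i}^{(1)}_{k_1-1},\ldots,k_{n-1}+\mathbf{i}^{(n-1)}_{k_{n-1}-1},k_n+\mathbf{i}^{(n)}_{k_n-2};\alpha\bigr) \] converge absolutely for $\alpha\in D(\beta)$ and uniformly on every compact subset of $D(\beta)$.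
   Context: An index $(k_1,\ldots,k_n)$ is admissible if all $k_i$ are positive integers and $k_n\ge2$. For $a\in\mathbb{C}$, $(a)_0=1$ and $(a)_m=a(a+1)\cdots(a+m-1)$ for $m\ge1$. For an admissible index and $\mathrm{Re}\,\alpha>0$, \[ Z(\mathbf{k};\alpha)=\sum_{0\le m_1<\cdots<m_n}\frac{(\alpha)_{m_1}}{m_1!}\frac{m_n!}{(\alpha)_{m_n+1}}\frac{1}{(m_1+\alpha)^{k_1}\cdots(m_{n-1}+\alpha)^{k_{n-1}}(m_n+\alpha)^{k_n-1}}, \] and $S_l(\mathbf{k};\alpha):=\sum_{l_1+\cdots+l_n=l,\ l_i\in\mathbb{Z}_{\ge0}}Z(k_1+l_1,\ldots,k_n+l_n;\alpha)$. $\{1\}^a$ denotes $a$ consecutive entries equal to $1$. For $m\ge1$, $r\ge0$, $\mathbf{i}^{(m)}_r:=i^{(m)}_1+\cdots+i^{(m)}_r$ (equal to $0$ if $r=0$); the sum over $\mathbf{i}^{(1)}_{k_1-1}+\cdots+\mathbf{i}^{(n)}_{k_n-2}=i$ runs over all tuples of nonnegative integers $(i^{(1)}_1,\ldots,i^{(1)}_{k_1-1},\ldots,i^{(n)}_1,\ldots,i^{(n)}_{k_n-2})$ with total sum $i$. *)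

theory Defs
  imports "HOL-Analysis.Analysis"
begin

definition admissible :: "nat list \<Rightarrow> bool" where
  "admissible ks \<longleftrightarrow> ks \<noteq> [] \<and> (\<forall>k\<in>set ks. k > 0) \<and> last ks \<ge> 2"

definition Z_term :: "nat list \<Rightarrow> complex \<Rightarrow> nat list \<Rightarrow> complex" where
  "Z_term ks \<alpha> ms =
     pochhammer \<alpha> (hd ms) / of_nat (fact (hd ms))
     * of_nat (fact (last ms)) / pochhammer \<alpha> (last ms + 1)
     * (\<Prod>j<length ks - 1. 1 / (of_nat (ms ! j) + \<alpha>) ^ (ks ! j))
     * (1 / (of_nat (last ms) + \<alpha>) ^ (last ks - 1))"

definition Z :: "nat list \<Rightarrow> complex \<Rightarrow> complex" where
  "Z ks \<alpha> = infsum (Z_term ks \<alpha>)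
      {ms. length ms = length ks \<and> sorted_wrt (<) ms}"

definition S :: "nat \<Rightarrow> nat list \<Rightarrow> complex \<Rightarrow> complex" where
  "S l ks \<alpha> = (\<Sum>ls\<in>{ls. length ls = length ks \<and> sum_list ls = l}.
                  Z (map2 (+) ks ls) \<alpha>)"

text \<open>(k_1,{1}^{i_1},k_2,...,k_{n-1},{1}^{i_{n-1}},k_n) for is = [i_1,...,i_{n-1}].\<close>
definition ins_ones :: "nat list \<Rightarrow> nat list \<Rightarrow> nat list" where
  "ins_ones ks is = concat (map (\<lambda>(k, i). k # replicate i 1) (zip (butlast ks) is)) @ [last ks]"

text \<open>Number of variables i^{(m)}_j in block m (0-based m): k_m - 1, except k_n - 2 for the last.\<close>
definition blk_len :: "nat list \<Rightarrow> nat \<Rightarrow> nat" where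
  "blk_len ks m = (if m = length ks - 1 then ks ! m - 2 else ks ! m - 1)"

definition series1_term :: "nat list \<Rightarrow> complex \<Rightarrow> complex \<Rightarrow> nat \<Rightarrow> complex" where
  "series1_term ks \<beta> \<alpha> l = (\<alpha> - \<beta>) ^ l *
     (\<Sum>i\<le>l. \<Sum>is\<in>{is. length is = length ks - 1 \<and> sum_list is = i}.
        S (l - i) (ins_ones ks is) \<alpha>)"

definition series2_term :: "nat list \<Rightarrow> complex \<Rightarrow> complex \<Rightarrow> nat \<Rightarrow> complex" where
  "series2_term ks \<beta> \<alpha> l = (\<alpha> - \<beta>) ^ l *
     (\<Sum>i\<le>l. \<Sum>iss\<in>{iss. length iss = length ks
                          \<and> (\<forall>m<length ks. length (iss ! m) = blk_len ks m)
                          \<and> sum_list (map sum_list iss) = i}.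
        S (l - i) (map2 (\<lambda>k is. k + sum_list is) ks iss) \<alpha>)"

end

theory Submission
  imports Defs
begin

text \<open>
  Let \<rho> bound |\<alpha> - \<beta>| on the compact set and put a = Re \<beta> - \<rho>, so that Re \<alpha> \<ge> a > \<rho>. Taking
  moduli termwise and replacing \<alpha> by a and \<alpha> - \<beta> by \<rho> gives majorants independent of \<alpha>, so both
  claims follow from the Weierstrass M-test once these real series converge.

  In the second series the depth of the indices is fixed and each unit added to an exponent costs a
  factor at most 1/a, so it is dominated by Z(k; a) times geometric series in \<rho>/a. In the first series
  the depth grows with i. Summing \<rho>^r S_r(k; a) over r replaces every factor 1/(m_j + a) by
  1/(m_j + a - \<rho>), which leaves a multiple of Z(1,\<dots>,1,2; a) with shifted poles. Expanding by the
  endpoints of the tuple and using (a)_n / n! ~ n^(a-1), this grows at most like t^(-N) in the depth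
  N for any t < a; choosing \<rho> < t < a makes the sum over i geometric.
\<close>

section \<open>Pochhammer asymptotics\<close>

lemma exp_mult_ln_powr_bounds:
  fixes z :: real assumes z: "z > 0"
  shows "exp (z * ln (real n)) \<le> (real n + 1) powr z"
    and "(real n + 1) powr z \<le> 2 powr z * exp (z * ln (real n))"
proof -
  show "exp (z * ln (real n)) \<le> (real n + 1) powr z"
  proof (cases "n = 0")
    case False
    then have "exp (z * ln (real n)) = real n powr z" by (simp add: powr_def)
    also have "\<dots> \<le> (real n + 1) powr z" using z by (intro powr_mono2) auto
    finally show ?thesis .
  qed simp
  show "(real n + 1) powr z \<le> 2 powr z * exp (z * ln (real n))"
  proof (cases "n = 0")
    case True then show ?thesis using z by (simp add: ge_one_powr_ge_zero)
  next
    case False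
    then have "exp (z * ln (real n)) = real n powr z" by (simp add: powr_def)
    moreover have "(real n + 1) powr z \<le> (2 * real n) powr z" using z False by (intro powr_mono2) auto
    ultimately show ?thesis by (simp add: powr_mult)
  qed
qed

lemma pochhammer_fact_asymp:
  fixes z :: real assumes z: "z > 0"
  shows "\<exists>c1 c2. c1 > 0 \<and> c2 > 0 \<and> (\<forall>n. c1 * (real n + 1) powr z \<le> pochhammer z (n+1) / fact n
                \<and> pochhammer z (n+1) / fact n \<le> c2 * (real n + 1) powr z)"
proof -
  have "convergent (Gamma_series z)" using Gamma_series_LIMSEQ[of z] by (auto simp: convergent_def)
  then obtain K1 where K1: "K1 > 0" "\<And>n. norm (Gamma_series z n) \<le> K1"
    using convergent_imp_Bseq BseqE by metis
  have "convergent (rGamma_series z)" using rGamma_series_LIMSEQ[of z] by (auto simp: convergent_def)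
  then obtain K2 where K2: "K2 > 0" "\<And>n. norm (rGamma_series z n) \<le> K2"
    using convergent_imp_Bseq BseqE by metis
  have pos: "pochhammer z m > 0" for m using z by (simp add: pochhammer_pos)
  note lower = exp_mult_ln_powr_bounds(1)[OF z] and upper = exp_mult_ln_powr_bounds(2)[OF z]
  show ?thesis
  proof (intro exI conjI allI)
    show "1 / (K1 * 2 powr z) > 0" using K1 by simp
    show "K2 > 0" by fact
    fix n
    have "Gamma_series z n = fact n * exp (z * ln (real n)) / pochhammer z (n+1)"
      by (simp add: Gamma_series_def)
    with K1(2)[of n] pos[of "n+1"]
    have "exp (z * ln (real n)) \<le> K1 * (pochhammer z (n+1) / fact n)"
      by (simp add: field_simps)
    with upper[of n] have "(real n + 1) powr z \<le> 2 powr z * K1 * (pochhammer z (n+1) / fact n)"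
      by (smt (verit) mult.assoc mult_left_mono powr_ge_zero)
    then show "1 / (K1 * 2 powr z) * (real n + 1) powr z \<le> pochhammer z (n+1) / fact n"
      using K1 by (simp add: field_simps)
    have "rGamma_series z n = pochhammer z (n+1) / (fact n * exp (z * ln (real n)))"
      by (simp add: rGamma_series_def)
    with K2(2)[of n] pos[of "n+1"]
    have "pochhammer z (n+1) / fact n \<le> K2 * exp (z * ln (real n))"
      by (simp add: field_simps)
    also have "\<dots> \<le> K2 * (real n + 1) powr z" using K2 lower by (intro mult_left_mono) auto
    finally show "pochhammer z (n+1) / fact n \<le> K2 * (real n + 1) powr z" .
  qed
qed

lemma pochhammer_ratio_le:
  fixes x y :: real assumes "x > 0" "y > 0"
  shows "\<exists>K>0. \<forall>n. pochhammer x (n+1) / pochhammer y (n+1) \<le> K * (real n + 1) powr (x - y)"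
proof -
  obtain c2 where c2: "c2 > 0" "\<And>n. pochhammer x (n+1) / fact n \<le> c2 * (real n + 1) powr x"
    using pochhammer_fact_asymp[OF \<open>x > 0\<close>] by blast
  obtain d1 where d1: "d1 > 0" "\<And>n. d1 * (real n + 1) powr y \<le> pochhammer y (n+1) / fact n"
    using pochhammer_fact_asymp[OF \<open>y > 0\<close>] by blast
  show ?thesis
  proof (intro exI[of _ "c2 / d1"] conjI allI)
    show "c2 / d1 > 0" using c2 d1 by simp
    fix n
    have "pochhammer x (n+1) / pochhammer y (n+1)
        = (pochhammer x (n+1) / fact n) / (pochhammer y (n+1) / fact n)"
      by simp
    also have "\<dots> \<le> (c2 * (real n + 1) powr x) / (d1 * (real n + 1) powr y)"
      by (rule frac_le) (use c2 d1 in \<open>auto intro: order.trans[OF _ d1(2)]\<close>)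
    also have "\<dots> = c2 / d1 * (real n + 1) powr (x - y)" by (simp add: powr_diff)
    finally show "pochhammer x (n+1) / pochhammer y (n+1) \<le> c2 / d1 * (real n + 1) powr (x - y)" .
  qed
qed

lemma inverse_shift_le:
  fixes b :: real assumes b: "b > 0"
  shows "1 / (real n + b) \<le> 1 / min b 1 * (real n + 1) powr (-1)"
proof -
  have "min b 1 * real n \<le> real n" by (rule mult_left_le_one_le) (use b in auto)
  then have "min b 1 * (real n + 1) \<le> real n + b" by (simp add: algebra_simps)
  moreover have "min b 1 * (real n + 1) > 0" using b by simp
  ultimately have "1 / (real n + b) \<le> 1 / (min b 1 * (real n + 1))"
    by (intro divide_left_mono) auto
  also have "\<dots> = 1 / min b 1 * (real n + 1) powr (-1)"
    by (simp add: powr_minus field_simps)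
  finally show ?thesis .
qed

lemma summable_shift_powr:
  assumes "e < -1" shows "summable (\<lambda>n. (real n + 1) powr e)"
proof -
  have "summable (\<lambda>n. real n powr e)" using assms summable_real_powr_iff by blast
  then have "summable (\<lambda>n. real (Suc n) powr e)" by (subst summable_Suc_iff)
  then show ?thesis by (simp add: add.commute)
qed

text \<open>The factor (a)_{m_1} / m_1! \<cdot> m_n! / (a)_{m_n+1} of the summand of Z, at a real argument a.\<close>

definition poch_weight :: "real \<Rightarrow> nat \<Rightarrow> nat \<Rightarrow> real" where
  "poch_weight a f L = pochhammer a f / fact f * fact L / pochhammer a (L+1)"

lemma poch_weight_nonneg: "a > 0 \<Longrightarrow> 0 \<le> poch_weight a f L"
  unfolding poch_weight_def
  by (intro mult_nonneg_nonneg divide_nonneg_pos) (auto simp: pochhammer_pos less_imp_le)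

lemma poch_weight_diag:
  assumes "a > 0" shows "poch_weight a m m = 1 / (real m + a)"
proof -
  have "pochhammer a m > 0" "fact m > (0::real)" "real m + a > 0" using assms by (auto simp: pochhammer_pos)
  then show ?thesis by (simp add: poch_weight_def pochhammer_Suc add.commute)
qed

lemma poch_weight_le:
  fixes a :: real assumes a: "a > 0"
  shows "\<exists>K>0. \<forall>f L. poch_weight a f L \<le> K * (real f + 1) powr (a - 1) * (real L + 1) powr (- a)"
proof -
  obtain c1 c2 where c: "c1 > 0" "c2 > 0"
    "\<And>n. c1 * (real n + 1) powr a \<le> pochhammer a (n+1) / fact n"
    "\<And>n. pochhammer a (n+1) / fact n \<le> c2 * (real n + 1) powr a"
    using pochhammer_fact_asymp[OF a] by blast
  define c where "c = 1 / min a 1"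
  have "c > 0" using a by (simp add: c_def)
  show ?thesis
  proof (intro exI[of _ "c2 * c / c1"] conjI allI)
    show "c2 * c / c1 > 0" using c \<open>c > 0\<close> by simp
    fix f L
    have "real f + a > 0" using a by simp
    then have "pochhammer a f / fact f = pochhammer a (f+1) / fact f * (1 / (real f + a))"
      by (simp add: pochhammer_Suc add.commute)
    also have "\<dots> \<le> (c2 * (real f + 1) powr a) * (c * (real f + 1) powr (-1))"
      using c(4)[of f] inverse_shift_le[OF a, of f] a c(2)
      by (intro mult_mono) (auto simp: c_def pochhammer_pos)
    also have "\<dots> = c2 * c * (real f + 1) powr (a - 1)"
      by (simp add: powr_diff powr_minus field_simps)
    finally have F: "pochhammer a f / fact f \<le> c2 * c * (real f + 1) powr (a - 1)" .
    have "fact L / pochhammer a (L+1) = 1 / (pochhammer a (L+1) / fact L)" by simp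
    also have "\<dots> \<le> 1 / (c1 * (real L + 1) powr a)"
      using c(1) c(3)[of L] a by (intro divide_left_mono) (auto simp: pochhammer_pos)
    also have "\<dots> = 1 / c1 * (real L + 1) powr (- a)" by (simp add: powr_minus field_simps)
    finally have L: "fact L / pochhammer a (L+1) \<le> 1 / c1 * (real L + 1) powr (- a)" .
    have "poch_weight a f L = (pochhammer a f / fact f) * (fact L / pochhammer a (L+1))"
      by (simp add: poch_weight_def)
    also have "\<dots> \<le> (c2 * c * (real f + 1) powr (a - 1)) * (1 / c1 * (real L + 1) powr (- a))"
      using F L a c(2) \<open>c > 0\<close> by (intro mult_mono) (auto simp: pochhammer_pos less_imp_le)
    finally show "poch_weight a f L \<le> c2 * c / c1 * (real f + 1) powr (a - 1) * (real L + 1) powr (- a)"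
      by (simp add: field_simps)
  qed
qed

lemma prod_one_plus_eq_pochhammer:
  fixes b t :: real assumes b: "b > 0" and t: "t \<ge> 0" and fL: "f < L"
  shows "(\<Prod>p\<in>{f<..<L}. 1 + t / (real p + b)) =
     pochhammer (b + t) L / pochhammer b L * (pochhammer b (f+1) / pochhammer (b+t) (f+1))"
proof -
  define m where "m = L - (f+1)"
  have L: "L = (f+1) + m" using fL by (simp add: m_def)
  have "{f<..<L} = (\<lambda>i. i + (f+1)) ` {0..<m}"
  proof (intro set_eqI iffI)
    fix x assume "x \<in> {f<..<L}"
    then have "x = (x - (f+1)) + (f+1)" "x - (f+1) \<in> {0..<m}" using L by auto
    then show "x \<in> (\<lambda>i. i + (f+1)) ` {0..<m}" by blast
  qed (use L in auto)
  then have "(\<Prod>p\<in>{f<..<L}. 1 + t / (real p + b)) = (\<Prod>i\<in>{0..<m}. 1 + t / (real (i + (f+1)) + b))"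
    by (simp add: prod.reindex inj_on_def)
  also have "\<dots> = (\<Prod>i\<in>{0..<m}. ((b + t + real (f+1)) + real i) / ((b + real (f+1)) + real i))"
    using b t by (intro prod.cong refl) (simp add: field_simps)
  also have "\<dots> = pochhammer (b + t + real (f+1)) m / pochhammer (b + real (f+1)) m"
    by (simp add: pochhammer_prod prod_dividef)
  also have "\<dots> = pochhammer (b + t) L / pochhammer b L * (pochhammer b (f+1) / pochhammer (b+t) (f+1))"
  proof -
    have "pochhammer (b+t) L = pochhammer (b+t) (f+1) * pochhammer (b + t + real (f+1)) m"
      "pochhammer b L = pochhammer b (f+1) * pochhammer (b + real (f+1)) m"
      unfolding L by (rule pochhammer_product')+
    moreover have "pochhammer (b+t) (f+1) > 0" "pochhammer b (f+1) > 0" "pochhammer (b + real (f+1)) m > 0"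
      using b t by (auto intro!: pochhammer_pos)
    ultimately show ?thesis by (simp add: field_simps)
  qed
  finally show ?thesis .
qed

lemma prod_one_plus_le:
  fixes b t :: real assumes b: "b > 0" and t: "t \<ge> 0"
  shows "\<exists>K>0. \<forall>f L. f < L \<longrightarrow>
     (\<Prod>p\<in>{f<..<L}. 1 + t / (real p + b)) \<le> K * (real L + 1) powr t * (real f + 1) powr (- t)"
proof -
  obtain K1 where K1: "K1 > 0" "\<And>n. pochhammer (b+t) (n+1) / pochhammer b (n+1) \<le> K1 * (real n + 1) powr t"
    using pochhammer_ratio_le[of "b+t" b] b t by auto
  obtain K2 where K2: "K2 > 0" "\<And>n. pochhammer b (n+1) / pochhammer (b+t) (n+1) \<le> K2 * (real n + 1) powr (- t)"
    using pochhammer_ratio_le[of b "b+t"] b t by auto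
  have pos: "pochhammer b n > 0" "pochhammer (b+t) n > 0" for n
    using b t by (auto intro!: pochhammer_pos)
  show ?thesis
  proof (intro exI[of _ "K1 * K2"] conjI allI impI)
    show "K1 * K2 > 0" using K1 K2 by simp
    fix f L :: nat assume fL: "f < L"
    then obtain m where m: "L = m + 1" by (metis Suc_eq_plus1 less_imp_Suc_add)
    have "K1 * (real m + 1) powr t \<le> K1 * (real L + 1) powr t"
      using K1(1) t m by (intro mult_left_mono powr_mono2) auto
    with K1(2)[of m] m have "pochhammer (b+t) L / pochhammer b L \<le> K1 * (real L + 1) powr t"
      by simp
    then have "(\<Prod>p\<in>{f<..<L}. 1 + t / (real p + b))
        \<le> (K1 * (real L + 1) powr t) * (K2 * (real f + 1) powr (- t))"
      unfolding prod_one_plus_eq_pochhammer[OF b t fL] using K1(1) K2(2)[of f] pos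
      by (intro mult_mono) (auto intro: divide_nonneg_pos less_imp_le)
    then show "(\<Prod>p\<in>{f<..<L}. 1 + t / (real p + b)) \<le> K1 * K2 * (real L + 1) powr t * (real f + 1) powr (- t)"
      by (simp add: mult_ac)
  qed
qed

lemma powr_shift_exponent:
  fixes X Y :: real assumes "0 < X" "X \<le> Y" "0 \<le> d"
  shows "X powr (e + d) * Y powr s \<le> X powr e * Y powr (s + d)"
proof -
  have "X powr d \<le> Y powr d" using assms by (intro powr_mono2) auto
  then have "X powr e * X powr d * Y powr s \<le> X powr e * Y powr d * Y powr s"
    by (intro mult_right_mono mult_left_mono) auto
  then show ?thesis by (simp add: powr_add mult_ac)
qed

lemma poch_weight_endpoint_powr_le:
  fixes a b t :: real assumes b: "b > 0" and t: "t > 0" and ta: "t < a"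
  shows "\<exists>C\<ge>0. \<forall>f L. f < L \<longrightarrow>
     poch_weight a f L * (1 / (real f + b)) * (1 / (real L + b)) * (\<Prod>p\<in>{f<..<L}. 1 + t / (real p + b))
       \<le> C * (real f + 1) powr (a - 2 - t) * (real L + 1) powr (t - a - 1)"
proof -
  have a: "a > 0" using t ta by simp
  obtain K1 where K1: "K1 > 0"
    "\<And>f L. poch_weight a f L \<le> K1 * (real f + 1) powr (a - 1) * (real L + 1) powr (- a)"
    using poch_weight_le[OF a] by blast
  obtain K2 where K2: "K2 > 0" "\<And>f L. f < L \<Longrightarrow>
     (\<Prod>p\<in>{f<..<L}. 1 + t / (real p + b)) \<le> K2 * (real L + 1) powr t * (real f + 1) powr (- t)"
    using prod_one_plus_le[OF b, of t] t by auto
  define c where "c = 1 / min b 1"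
  have "c > 0" using b by (simp add: c_def)
  have "poch_weight a f L * (1 / (real f + b)) * (1 / (real L + b)) * (\<Prod>p\<in>{f<..<L}. 1 + t / (real p + b))
       \<le> K1 * K2 * c * c * (real f + 1) powr (a - 2 - t) * (real L + 1) powr (t - a - 1)"
    if fL: "f < L" for f L
  proof -
    define X where "X = real f + 1"
    define Y where "Y = real L + 1"
    have "poch_weight a f L * (1 / (real f + b)) * (1 / (real L + b)) * (\<Prod>p\<in>{f<..<L}. 1 + t / (real p + b))
       \<le> (K1 * X powr (a - 1) * Y powr (- a)) * (c * X powr (-1)) * (c * Y powr (-1))
          * (K2 * Y powr t * X powr (- t))"
      using K1(2)[of f L] K2(2)[OF fL] inverse_shift_le[OF b, of f] inverse_shift_le[OF b, of L]
        poch_weight_nonneg[OF a, of f L] b t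
      unfolding X_def Y_def c_def
      by (intro mult_mono) (auto intro!: mult_nonneg_nonneg prod_nonneg add_nonneg_nonneg)
    also have "\<dots> = K1 * K2 * c * c * (X powr (a - 1) * X powr (-1) * X powr (- t))
        * (Y powr (- a) * Y powr (-1) * Y powr t)"
      by (simp add: mult_ac)
    also have "\<dots> = K1 * K2 * c * c * X powr (a - 1 + -1 + - t) * Y powr (- a + -1 + t)"
      by (simp only: powr_add mult.assoc)
    finally show ?thesis by (simp add: X_def Y_def algebra_simps)
  qed
  moreover have "K1 * K2 * c * c \<ge> 0" using K1 K2 \<open>c > 0\<close> by simp
  ultimately show ?thesis by blast
qed

lemma poch_weight_endpoint_le:
  fixes a b t :: real assumes b: "b > 0" and t: "t > 0" and ta: "t < a"
  shows "\<exists>C e s. 0 \<le> C \<and> e < -1 \<and> s < -1 \<and> (\<forall>f L. f < L \<longrightarrow>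
     poch_weight a f L * (1 / (real f + b)) * (1 / (real L + b)) * (\<Prod>p\<in>{f<..<L}. 1 + t / (real p + b))
       \<le> C * (real f + 1) powr e * (real L + 1) powr s)"
proof -
  obtain C where C: "C \<ge> 0" "\<And>f L. f < L \<Longrightarrow>
     poch_weight a f L * (1 / (real f + b)) * (1 / (real L + b)) * (\<Prod>p\<in>{f<..<L}. 1 + t / (real p + b))
       \<le> C * (real f + 1) powr (a - 2 - t) * (real L + 1) powr (t - a - 1)"
    using poch_weight_endpoint_powr_le[OF assms] by blast
  \<comment> \<open>Only the sum of the exponents is below -2; move the excess of the exponent of the smaller
    base f + 1 over -3/2 onto L + 1.\<close>
  define e where "e = min (a - 2 - t) (-3/2)"
  define s where "s = t - a - 1 + (a - 2 - t - e)"
  have es: "e < -1" "s < -1" using ta by (auto simp: e_def s_def min_def)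
  have "C * (real f + 1) powr (a - 2 - t) * (real L + 1) powr (t - a - 1)
      \<le> C * (real f + 1) powr e * (real L + 1) powr s" if "f < L" for f L
    using powr_shift_exponent[of "real f + 1" "real L + 1" "a - 2 - t - e" e "t - a - 1"] that C(1)
    by (auto simp: e_def s_def mult.assoc intro!: mult_left_mono)
  with C es show ?thesis by (meson order_trans)
qed

section \<open>Sums over increasing tuples\<close>

definition incr_lists :: "nat \<Rightarrow> nat list set" where
  "incr_lists N = {ms. length ms = N \<and> sorted_wrt (<) ms}"

lemma incr_lists_hd_le_le_last:
  assumes "ms \<in> incr_lists N" "x \<in> set ms"
  shows "hd ms \<le> x \<and> x \<le> last ms"
proof -
  have ms: "sorted_wrt (<) ms" and ne: "ms \<noteq> []" using assms by (auto simp: incr_lists_def)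
  obtain j where j: "j < length ms" "x = ms ! j" using assms(2) by (auto simp: in_set_conv_nth)
  have "ms ! 0 \<le> ms ! j"
    using j sorted_wrt_nth_less[OF ms, of 0 j] by (cases "j = 0") auto
  moreover have "ms ! j \<le> ms ! (length ms - 1)"
  proof (cases "j = length ms - 1")
    case False
    then have "j < length ms - 1" using j by simp
    from sorted_wrt_nth_less[OF ms this] ne show ?thesis by simp
  qed simp
  ultimately show ?thesis using j ne by (simp add: hd_conv_nth last_conv_nth)
qed

lemma incr_lists_hd_less_last:
  assumes "ms \<in> incr_lists N" "N \<ge> 2"
  shows "hd ms < last ms"
proof -
  have ms: "length ms = N" "sorted_wrt (<) ms" using assms by (auto simp: incr_lists_def)
  have ne: "ms \<noteq> []" using ms assms by auto
  show ?thesis using sorted_wrt_nth_less[OF ms(2), of 0 "N - 1"] ms assms ne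
    by (simp add: hd_conv_nth last_conv_nth)
qed

lemma incr_lists_eqI:
  assumes "xs \<in> incr_lists N" "ys \<in> incr_lists N" "set xs = set ys"
  shows "xs = ys"
  using assms by (intro sorted_distinct_set_unique) (auto simp: incr_lists_def strict_sorted_iff)

lemma prod_nth_distinct:
  assumes "distinct ms"
  shows "(\<Prod>j<length ms. g (ms ! j)) = (\<Prod>p\<in>set ms. g p)"
proof -
  have "set ms = (nth ms) ` {..<length ms}" by (auto simp: in_set_conv_nth image_iff)
  moreover have "inj_on (nth ms) {..<length ms}" using assms by (intro inj_on_nth) auto
  ultimately show ?thesis by (simp add: prod.reindex)
qed

text \<open>The summand of Z(1,\<dots>,1,2; a), with the poles of the factors 1/(m_j + a) moved to -b.\<close>

definition Z_ones_term :: "real \<Rightarrow> real \<Rightarrow> nat list \<Rightarrow> real" where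
  "Z_ones_term a b ms = poch_weight a (hd ms) (last ms) * (\<Prod>j<length ms. 1 / (real (ms ! j) + b))"

lemma Z_ones_term_nonneg: "a > 0 \<Longrightarrow> b > 0 \<Longrightarrow> 0 \<le> Z_ones_term a b ms"
  unfolding Z_ones_term_def by (intro mult_nonneg_nonneg poch_weight_nonneg prod_nonneg) auto

lemma Z_ones_term_eq_interior:
  fixes a b t :: real
  assumes ms: "ms \<in> incr_lists N" and N: "N \<ge> 2" and t: "t > 0"
  defines "f \<equiv> hd ms" and "L \<equiv> last ms"
  shows "Z_ones_term a b ms = (1/t)^(N-2) * (poch_weight a f L * (1 / (real f + b)) * (1 / (real L + b))
           * (\<Prod>p\<in>set ms - {f, L}. t / (real p + b)))"
proof -
  define T where "T = set ms - {f, L}"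
  have len: "length ms = N" and dist: "distinct ms" using ms by (auto simp: incr_lists_def strict_sorted_iff)
  have fL: "f < L" using incr_lists_hd_less_last[OF ms N] by (simp add: f_def L_def)
  have "ms \<noteq> []" using len N by auto
  then have setms: "set ms = insert f (insert L T)" by (auto simp: T_def f_def L_def)
  have T: "f \<notin> insert L T" "L \<notin> T" "finite T" using fL by (auto simp: T_def)
  then have "card (set ms) = card T + 2" unfolding setms by simp
  then have cardT: "card T = N - 2" using dist len by (simp add: distinct_card)
  have "(\<Prod>p\<in>T. t / (real p + b)) = (\<Prod>p\<in>T. t * (1 / (real p + b)))" by simp
  also have "\<dots> = t ^ (N - 2) * (\<Prod>p\<in>T. 1 / (real p + b))" by (simp only: prod.distrib prod_constant cardT)
  finally have "(\<Prod>p\<in>T. 1 / (real p + b)) = (1/t)^(N-2) * (\<Prod>p\<in>T. t / (real p + b))"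
    using t by (simp add: power_one_over)
  moreover have "(\<Prod>p\<in>set ms. 1 / (real p + b))
      = 1 / (real f + b) * (1 / (real L + b) * (\<Prod>p\<in>T. 1 / (real p + b)))"
    using T unfolding setms by simp
  ultimately show ?thesis
    unfolding Z_ones_term_def f_def[symmetric] L_def[symmetric] T_def[symmetric]
    by (simp add: prod_nth_distinct[OF dist, of "\<lambda>p. 1 / (real p + b)"] mult_ac)
qed

lemma sum_pairs_powr_le:
  fixes P :: "(nat \<times> nat) set"
  assumes "finite P" "0 \<le> C" "e < -1" "s < -1"
  shows "(\<Sum>(f, L)\<in>P. C * (real f + 1) powr e * (real L + 1) powr s)
       \<le> C * suminf (\<lambda>n. (real n + 1) powr e) * suminf (\<lambda>n. (real n + 1) powr s)"
proof -
  have "(\<Sum>(f, L)\<in>P. C * (real f + 1) powr e * (real L + 1) powr s)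
      \<le> (\<Sum>(f, L)\<in>fst ` P \<times> snd ` P. C * (real f + 1) powr e * (real L + 1) powr s)"
    using assms by (intro sum_mono2) force+
  also have "\<dots> = C * (\<Sum>f\<in>fst ` P. \<Sum>L\<in>snd ` P. (real f + 1) powr e * (real L + 1) powr s)"
    unfolding sum.cartesian_product[symmetric] sum_distrib_left by (simp add: mult_ac)
  also have "\<dots> = C * ((\<Sum>f\<in>fst ` P. (real f + 1) powr e) * (\<Sum>L\<in>snd ` P. (real L + 1) powr s))"
    by (simp add: sum_product)
  also have "\<dots> \<le> C * (suminf (\<lambda>n. (real n + 1) powr e) * suminf (\<lambda>n. (real n + 1) powr s))"
    using assms summable_shift_powr[OF assms(3)] summable_shift_powr[OF assms(4)]
    by (intro mult_left_mono mult_mono sum_le_suminf sum_nonneg suminf_nonneg) auto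
  finally show ?thesis by (simp add: mult_ac)
qed

lemma incr_lists_interior_subset:
  assumes "ms \<in> incr_lists N"
  shows "set ms - {hd ms, last ms} \<subseteq> {hd ms<..<last ms}"
  using incr_lists_hd_le_le_last[OF assms] by force

lemma inj_on_endpoints_interior:
  "inj_on (\<lambda>ms. ((hd ms, last ms), set ms - {hd ms, last ms})) (incr_lists N)"
proof (rule inj_onI)
  fix x y assume x: "x \<in> incr_lists N" and y: "y \<in> incr_lists N"
    and xy: "((hd x, last x), set x - {hd x, last x}) = ((hd y, last y), set y - {hd y, last y})"
  show "x = y"
  proof (cases "N = 0")
    case False
    then have "x \<noteq> []" "y \<noteq> []" using x y by (auto simp: incr_lists_def)
    then have "set x = insert (hd x) (insert (last x) (set x - {hd x, last x}))"
      "set y = insert (hd y) (insert (last y) (set y - {hd y, last y}))" by auto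
    with xy have "set x = set y" by (metis prod.inject)
    then show "x = y" using x y by (rule incr_lists_eqI[rotated 2])
  qed (use x y in \<open>simp add: incr_lists_def\<close>)
qed

lemma sum_Pow_prod:
  fixes g :: "'a \<Rightarrow> 'b::comm_semiring_1"
  assumes "finite A"
  shows "(\<Sum>T\<in>Pow A. \<Prod>p\<in>T. g p) = (\<Prod>p\<in>A. 1 + g p)"
  using prod_add[OF assms, of g "\<lambda>_. 1"] by (simp add: add.commute)

text \<open>For N \<ge> 2, expand by the endpoints f < L: the interior points form a subset of (f, L), and
  summing over all such subsets gives the product of the factors 1 + t/(p + b).\<close>

lemma sum_Z_ones_term_le:
  fixes a b t C e s :: real
  assumes b: "b > 0" and t: "t > 0" and ta: "t < a" and C: "C \<ge> 0" and e: "e < -1" and s: "s < -1"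
    and endpoint: "\<And>f L. f < L \<Longrightarrow> poch_weight a f L * (1 / (real f + b)) * (1 / (real L + b))
       * (\<Prod>p\<in>{f<..<L}. 1 + t / (real p + b)) \<le> C * (real f + 1) powr e * (real L + 1) powr s"
    and N: "N \<ge> 2" and F: "finite F" "F \<subseteq> incr_lists N"
  shows "sum (Z_ones_term a b) F
    \<le> (1/t)^(N-2) * (C * suminf (\<lambda>n. (real n + 1) powr e) * suminf (\<lambda>n. (real n + 1) powr s))"
proof -
  have a: "a > 0" using t ta by simp
  define \<phi> where "\<phi> = (\<lambda>ms::nat list. ((hd ms, last ms), set ms - {hd ms, last ms}))"
  define h where "h = (\<lambda>((f::nat, L::nat), T::nat set). poch_weight a f L * (1 / (real f + b))
     * (1 / (real L + b)) * (\<Prod>p\<in>T. t / (real p + b)))"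
  define P where "P = (\<lambda>ms. (hd ms, last ms)) ` F"
  define Q where "Q = Sigma P (\<lambda>(f, L). Pow {f<..<L})"
  have finP: "finite P" using F by (simp add: P_def)
  then have finQ: "finite Q" unfolding Q_def by (intro finite_SigmaI) auto
  have h_nonneg: "h x \<ge> 0" for x
  proof -
    obtain f L T where "x = ((f, L), T)" by (metis prod.exhaust)
    then show ?thesis unfolding h_def
      by (simp only: prod.case, intro mult_nonneg_nonneg poch_weight_nonneg[OF a] prod_nonneg ballI
          divide_nonneg_nonneg; use t b in auto)
  qed
  have inj: "inj_on \<phi> F"
    using inj_on_subset[OF inj_on_endpoints_interior F(2)] by (simp add: \<phi>_def)
  have "\<phi> ` F \<subseteq> Q"
  proof (rule image_subsetI)
    fix ms assume "ms \<in> F"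
    moreover from this have ms: "ms \<in> incr_lists N" using F by auto
    note incr_lists_hd_less_last[OF ms N] incr_lists_interior_subset[OF ms]
    ultimately show "\<phi> ms \<in> Q" by (simp add: \<phi>_def Q_def P_def)
  qed
  have "sum (Z_ones_term a b) F = (1/t)^(N-2) * sum (h \<circ> \<phi>) F"
    using Z_ones_term_eq_interior[OF _ N t] F by (simp add: sum_distrib_left h_def \<phi>_def subset_iff)
  also have "sum (h \<circ> \<phi>) F = sum h (\<phi> ` F)" using inj by (simp add: sum.reindex)
  also have "\<dots> \<le> sum h Q" using \<open>\<phi> ` F \<subseteq> Q\<close> finQ h_nonneg by (intro sum_mono2) auto
  also have "\<dots> = (\<Sum>(f, L)\<in>P. \<Sum>T\<in>Pow {f<..<L}. h ((f, L), T))"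
  proof -
    have "(\<Sum>x\<in>P. \<Sum>T\<in>(case x of (f, L) \<Rightarrow> Pow {f<..<L}). h (x, T)) = (\<Sum>(x, T)\<in>Q. h (x, T))"
      unfolding Q_def by (rule sum.Sigma) (use finP in auto)
    then show ?thesis by (simp add: case_prod_beta')
  qed
  also have "\<dots> = (\<Sum>(f, L)\<in>P. poch_weight a f L * (1 / (real f + b)) * (1 / (real L + b))
      * (\<Prod>p\<in>{f<..<L}. 1 + t / (real p + b)))"
    by (intro sum.cong refl, clarify) (simp add: h_def sum_Pow_prod flip: sum_distrib_left sum_divide_distrib)
  also have "\<dots> \<le> (\<Sum>(f, L)\<in>P. C * (real f + 1) powr e * (real L + 1) powr s)"
  proof (intro sum_mono, clarify)
    fix f L assume "(f, L) \<in> P"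
    then have "f < L" using F incr_lists_hd_less_last[OF _ N] by (auto simp: P_def)
    then show "poch_weight a f L * (1 / (real f + b)) * (1 / (real L + b)) * (\<Prod>p\<in>{f<..<L}. 1 + t / (real p + b))
      \<le> C * (real f + 1) powr e * (real L + 1) powr s" by (rule endpoint)
  qed
  also have "\<dots> \<le> C * suminf (\<lambda>n. (real n + 1) powr e) * suminf (\<lambda>n. (real n + 1) powr s)"
    using finP C e s by (rule sum_pairs_powr_le)
  finally show ?thesis using t by (simp add: mult_left_mono)
qed

lemma sum_Z_ones_term_le_singleton:
  fixes a b :: real
  assumes b: "b > 0" and ba: "b \<le> a" and F: "finite F" "F \<subseteq> incr_lists 1"
  shows "sum (Z_ones_term a b) F \<le> (1 / min b 1)^2 * suminf (\<lambda>n. (real n + 1) powr (-2))"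
proof -
  define c where "c = 1 / min b 1"
  have singleton: "ms = [hd ms]" if "ms \<in> F" for ms
    using that F by (cases ms) (auto simp: incr_lists_def)
  then have "inj_on hd F" by (metis inj_onI)
  moreover have "Z_ones_term a b ms = 1 / (real (hd ms) + a) * (1 / (real (hd ms) + b))" if ms: "ms \<in> F" for ms
  proof -
    have "a > 0" using b ba by simp
    obtain m where "ms = [m]" using singleton[OF ms] by blast
    with \<open>a > 0\<close> show ?thesis by (simp add: Z_ones_term_def poch_weight_diag)
  qed
  ultimately have "sum (Z_ones_term a b) F
      = (\<Sum>m\<in>hd ` F. 1 / (real m + a) * (1 / (real m + b)))"
    by (simp add: sum.reindex)
  also have "\<dots> \<le> (\<Sum>m\<in>hd ` F. c^2 * (real m + 1) powr (-2))"
  proof (intro sum_mono)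
    fix m
    have "c > 0" using b by (simp add: c_def)
    have inv: "1 / (real m + b) \<le> c * (real m + 1) powr (-1)"
      using inverse_shift_le[OF b, of m] by (simp add: c_def)
    moreover have "1 / (real m + a) \<le> 1 / (real m + b)" using b ba by (intro divide_left_mono) auto
    ultimately have "1 / (real m + a) * (1 / (real m + b)) \<le> (c * (real m + 1) powr (-1))^2"
      unfolding power2_eq_square using b ba \<open>c > 0\<close> by (intro mult_mono) auto
    also have "\<dots> = c^2 * ((real m + 1) powr (-1) * (real m + 1) powr (-1))"
      by (simp add: power2_eq_square mult_ac)
    also have "\<dots> = c^2 * (real m + 1) powr (-2)" by (subst powr_add[symmetric]) simp
    finally show "1 / (real m + a) * (1 / (real m + b)) \<le> c^2 * (real m + 1) powr (-2)" .
  qed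
  also have "\<dots> \<le> c^2 * suminf (\<lambda>n. (real n + 1) powr (-2))"
    unfolding sum_distrib_left[symmetric] using summable_shift_powr[of "-2"] F
    by (intro mult_left_mono sum_le_suminf) auto
  finally show ?thesis by (simp add: c_def)
qed

lemma Z_ones_term_finite_sums_le:
  fixes a b t :: real
  assumes b: "b > 0" and ba: "b \<le> a" and t: "t > 0" and ta: "t < a"
  shows "\<exists>C\<ge>0. \<forall>N\<ge>1. \<forall>F. finite F \<longrightarrow> F \<subseteq> incr_lists N \<longrightarrow> sum (Z_ones_term a b) F \<le> C * (1/t)^N"
proof -
  obtain C0 e s where endpoint: "0 \<le> C0" "e < -1" "s < -1" "\<And>f L. f < L \<Longrightarrow>
     poch_weight a f L * (1 / (real f + b)) * (1 / (real L + b)) * (\<Prod>p\<in>{f<..<L}. 1 + t / (real p + b))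
       \<le> C0 * (real f + 1) powr e * (real L + 1) powr s"
    using poch_weight_endpoint_le[OF b t ta] by blast
  define C2 where "C2 = C0 * suminf (\<lambda>n. (real n + 1) powr e) * suminf (\<lambda>n. (real n + 1) powr s)"
  define C1 where "C1 = (1 / min b 1)^2 * suminf (\<lambda>n. (real n + 1) powr (-2::real))"
  have "C2 \<ge> 0" unfolding C2_def
    using endpoint summable_shift_powr[OF endpoint(2)] summable_shift_powr[OF endpoint(3)]
    by (intro mult_nonneg_nonneg suminf_nonneg) auto
  have "C1 \<ge> 0" unfolding C1_def using summable_shift_powr[of "-2"]
    by (intro mult_nonneg_nonneg suminf_nonneg) auto
  define C where "C = max (C2 * t^2) (C1 * t)"
  have "C \<ge> 0" using \<open>C1 \<ge> 0\<close> t by (simp add: C_def le_max_iff_disj)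
  moreover have "sum (Z_ones_term a b) F \<le> C * (1/t)^N"
    if N: "N \<ge> 1" and F: "finite F" "F \<subseteq> incr_lists N" for N F
  proof (cases "N = 1")
    case True
    then have "sum (Z_ones_term a b) F \<le> (C1 * t) * (1/t)^N"
      using sum_Z_ones_term_le_singleton[OF b ba F(1)] F t by (simp add: C1_def)
    also have "\<dots> \<le> C * (1/t)^N" using t by (intro mult_right_mono) (auto simp: C_def)
    finally show ?thesis .
  next
    case False
    then have N2: "N \<ge> 2" using N by simp
    have "sum (Z_ones_term a b) F \<le> (1/t)^(N-2) * C2"
      using sum_Z_ones_term_le[OF b t ta endpoint N2 F] by (simp add: C2_def)
    also have "\<dots> = (C2 * t^2) * (1/t)^N"
      using t N2 by (simp add: power_one_over power_diff field_simps)
    also have "\<dots> \<le> C * (1/t)^N" using t by (intro mult_right_mono) (auto simp: C_def)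
    finally show ?thesis .
  qed
  ultimately show ?thesis by blast
qed

lemma Z_ones_term_summable_le:
  fixes a b t :: real
  assumes b: "b > 0" and ba: "b \<le> a" and t: "t > 0" and ta: "t < a"
  shows "\<exists>C\<ge>0. \<forall>N\<ge>1. Z_ones_term a b summable_on incr_lists N
                      \<and> infsum (Z_ones_term a b) (incr_lists N) \<le> C * (1/t)^N"
proof -
  obtain C where C: "C \<ge> 0" "\<And>N F. N \<ge> 1 \<Longrightarrow> finite F \<Longrightarrow> F \<subseteq> incr_lists N
      \<Longrightarrow> sum (Z_ones_term a b) F \<le> C * (1/t)^N"
    using Z_ones_term_finite_sums_le[OF assms] by blast
  have nonneg: "Z_ones_term a b ms \<ge> 0" for ms using Z_ones_term_nonneg b ba by simp
  have "Z_ones_term a b summable_on incr_lists N \<and> infsum (Z_ones_term a b) (incr_lists N) \<le> C * (1/t)^N"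
    if "N \<ge> 1" for N
  proof
    show sm: "Z_ones_term a b summable_on incr_lists N"
      by (rule nonneg_bdd_above_summable_on) (use nonneg C(2)[OF that] in \<open>auto simp: bdd_above_def\<close>)
    show "infsum (Z_ones_term a b) (incr_lists N) \<le> C * (1/t)^N"
      by (rule infsum_le_finite_sums[OF sm]) (use C(2)[OF that] in auto)
  qed
  with C(1) show ?thesis by blast
qed

lemma Z_ones_term_summable:
  assumes "0 < b" "b \<le> a" "N \<ge> 1"
  shows "Z_ones_term a b summable_on incr_lists N"
  using Z_ones_term_summable_le[of b a "a / 2"] assms by auto

definition lists_below :: "nat \<Rightarrow> nat \<Rightarrow> nat list set" where
  "lists_below N R = {xs. set xs \<subseteq> {..<R} \<and> length xs = N}"

lemma finite_lists_below: "finite (lists_below N R)"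
  unfolding lists_below_def by (rule finite_lists_length_eq) simp

lemma lists_below_if_sum_list_less: "length xs = N \<Longrightarrow> sum_list xs < R \<Longrightarrow> xs \<in> lists_below N R"
  unfolding lists_below_def by (auto dest: member_le_sum_list)

lemma sum_lists_below_prod:
  fixes f :: "nat \<Rightarrow> nat \<Rightarrow> 'a::comm_semiring_1"
  shows "(\<Sum>xs\<in>lists_below N R. \<Prod>j<N. f j (xs ! j)) = (\<Prod>j<N. \<Sum>x<R. f j x)"
proof (induction N)
  case 0
  have "lists_below 0 R = {[]}" by (auto simp: lists_below_def)
  then show ?case by simp
next
  case (Suc N)
  have eq: "lists_below (Suc N) R = (\<lambda>(xs, x). xs @ [x]) ` (lists_below N R \<times> {..<R})"
  proof (intro set_eqI iffI)
    fix ys assume "ys \<in> lists_below (Suc N) R"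
    then have ys: "set ys \<subseteq> {..<R}" "length ys = Suc N" by (auto simp: lists_below_def)
    then have "ys \<noteq> []" by auto
    then have "ys = butlast ys @ [last ys]" by simp
    moreover have "butlast ys \<in> lists_below N R" using ys by (auto simp: lists_below_def dest: in_set_butlastD)
    moreover have "last ys \<in> {..<R}" using ys \<open>ys \<noteq> []\<close> last_in_set by blast
    ultimately show "ys \<in> (\<lambda>(xs, x). xs @ [x]) ` (lists_below N R \<times> {..<R})"
      by (metis (no_types, lifting) SigmaI case_prod_conv image_eqI)
  qed (auto simp: lists_below_def)
  have inj: "inj_on (\<lambda>(xs, x). xs @ [x]) (lists_below N R \<times> {..<R})"
    by (auto simp: inj_on_def)
  have "(\<Sum>xs\<in>lists_below (Suc N) R. \<Prod>j<Suc N. f j (xs ! j))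
      = (\<Sum>(xs, x)\<in>lists_below N R \<times> {..<R}. \<Prod>j<Suc N. f j ((xs @ [x]) ! j))"
    unfolding eq by (subst sum.reindex[OF inj]) (simp add: case_prod_beta')
  also have "\<dots> = (\<Sum>(xs, x)\<in>lists_below N R \<times> {..<R}. (\<Prod>j<N. f j (xs ! j)) * f N x)"
  proof (intro sum.cong refl, clarify)
    fix xs x assume "xs \<in> lists_below N R"
    then have l: "length xs = N" by (simp add: lists_below_def)
    have "(\<Prod>j<N. f j ((xs @ [x]) ! j)) = (\<Prod>j<N. f j (xs ! j))"
      using l by (intro prod.cong refl) (simp add: nth_append)
    then show "(\<Prod>j<Suc N. f j ((xs @ [x]) ! j)) = (\<Prod>j<N. f j (xs ! j)) * f N x"
      using l by (simp add: nth_append)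
  qed
  also have "\<dots> = (\<Sum>xs\<in>lists_below N R. \<Prod>j<N. f j (xs ! j)) * (\<Sum>x<R. f N x)"
    by (simp add: sum_product sum.cartesian_product)
  finally show ?case using Suc.IH by simp
qed

lemma sum_prod_power_le:
  fixes q :: "nat \<Rightarrow> real"
  assumes q: "\<And>j. j < N \<Longrightarrow> 0 \<le> q j \<and> q j < 1" and A: "A \<subseteq> lists_below N R"
  shows "(\<Sum>xs\<in>A. \<Prod>j<N. q j ^ (xs ! j)) \<le> (\<Prod>j<N. 1 / (1 - q j))"
proof -
  have "(\<Sum>xs\<in>A. \<Prod>j<N. q j ^ (xs ! j)) \<le> (\<Sum>xs\<in>lists_below N R. \<Prod>j<N. q j ^ (xs ! j))"
    using A finite_lists_below q by (intro sum_mono2 prod_nonneg) auto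
  also have "\<dots> = (\<Prod>j<N. \<Sum>x<R. q j ^ x)" by (rule sum_lists_below_prod)
  also have "\<dots> \<le> (\<Prod>j<N. 1 / (1 - q j))"
  proof (intro prod_mono conjI)
    fix j assume "j \<in> {..<N}"
    then have qj: "0 \<le> q j" "q j < 1" using q by auto
    show "0 \<le> (\<Sum>x<R. q j ^ x)" using qj by (intro sum_nonneg) auto
    have "(\<Sum>x<R. q j ^ x) = (1 - q j ^ R) / (1 - q j)" using qj by (subst sum_gp_strict) auto
    also have "\<dots> \<le> 1 / (1 - q j)" using qj by (intro divide_right_mono) auto
    finally show "(\<Sum>x<R. q j ^ x) \<le> 1 / (1 - q j)" .
  qed
  finally show ?thesis .
qed

lemma sum_power_sum_list_le:
  fixes q :: real
  assumes q: "0 \<le> q" "q < 1" and A: "A \<subseteq> lists_below N R"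
  shows "(\<Sum>xs\<in>A. q ^ sum_list xs) \<le> (1 / (1 - q)) ^ N"
proof -
  have "(\<Sum>xs\<in>A. q ^ sum_list xs) = (\<Sum>xs\<in>A. \<Prod>j<N. q ^ (xs ! j))"
  proof (intro sum.cong refl)
    fix xs assume "xs \<in> A"
    then have "length xs = N" using A by (auto simp: lists_below_def)
    then show "q ^ sum_list xs = (\<Prod>j<N. q ^ (xs ! j))"
      by (simp add: sum_list_sum_nth atLeast0LessThan power_sum)
  qed
  also have "\<dots> \<le> (\<Prod>j<N. 1 / (1 - q))" using sum_prod_power_le[of N "\<lambda>_. q" A R] q A by auto
  finally show ?thesis by simp
qed

lemma sum_group_by_level:
  fixes h :: "'x \<Rightarrow> 'a::comm_monoid_add" and g :: "'x \<Rightarrow> nat"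
  assumes "finite {x\<in>A. g x < L}"
  shows "(\<Sum>i<L. \<Sum>x\<in>{x\<in>A. g x = i}. h x) = (\<Sum>x\<in>{x\<in>A. g x < L}. h x)"
proof -
  have "(\<Sum>x\<in>{x\<in>A. g x < L}. h x) = (\<Sum>i<L. \<Sum>x\<in>{x. x \<in> {x\<in>A. g x < L} \<and> g x = i}. h x)"
    by (rule sum.group[symmetric]) (use assms in auto)
  also have "\<dots> = (\<Sum>i<L. \<Sum>x\<in>{x\<in>A. g x = i}. h x)"
    by (intro sum.cong refl arg_cong[where f="\<lambda>S. sum h S"]) auto
  finally show ?thesis ..
qed

lemma sum_group_by_sum_list:
  fixes h :: "nat list \<Rightarrow> 'a::comm_monoid_add"
  shows "(\<Sum>i<L. \<Sum>xs\<in>{xs. length xs = N \<and> sum_list xs = i}. h xs)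
       = (\<Sum>xs\<in>{xs. length xs = N \<and> sum_list xs < L}. h xs)"
  using sum_group_by_level[of "{xs. length xs = N}" sum_list L h]
    finite_subset[OF _ finite_lists_below[of N L]] lists_below_if_sum_list_less
  by (simp add: subset_iff)

lemma infsum_finite_sum:
  fixes f :: "'i \<Rightarrow> 'x \<Rightarrow> real"
  assumes "finite I" "\<And>i. i \<in> I \<Longrightarrow> f i summable_on A"
  shows "infsum (\<lambda>x. \<Sum>i\<in>I. f i x) A = (\<Sum>i\<in>I. infsum (f i) A)"
    and "(\<lambda>x. \<Sum>i\<in>I. f i x) summable_on A"
proof -
  have "infsum (\<lambda>x. \<Sum>i\<in>I. f i x) A = (\<Sum>i\<in>I. infsum (f i) A) \<and> (\<lambda>x. \<Sum>i\<in>I. f i x) summable_on A"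
    using assms
  proof (induction I rule: finite_induct)
    case (insert j I)
    then have fj: "f j summable_on A" and IH: "infsum (\<lambda>x. \<Sum>i\<in>I. f i x) A = (\<Sum>i\<in>I. infsum (f i) A)"
      and sm: "(\<lambda>x. \<Sum>i\<in>I. f i x) summable_on A" by auto
    show ?case
      using infsum_add[OF fj sm] summable_on_add[OF fj sm] insert.hyps IH by simp
  qed simp
  then show "infsum (\<lambda>x. \<Sum>i\<in>I. f i x) A = (\<Sum>i\<in>I. infsum (f i) A)"
    and "(\<lambda>x. \<Sum>i\<in>I. f i x) summable_on A" by auto
qed

section \<open>Real majorants of Z and S\<close>

lemma norm_pochhammer_ge:
  fixes z :: complex assumes "Re z \<ge> c" "c > 0"
  shows "norm (pochhammer z k) \<ge> pochhammer c k"
proof -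
  have "pochhammer c k = (\<Prod>i<k. c + real i)" by (simp add: pochhammer_prod atLeast0LessThan)
  also have "\<dots> \<le> (\<Prod>i<k. norm (z + of_nat i))"
  proof (intro prod_mono conjI)
    fix i show "0 \<le> c + real i" using assms by simp
    have "c + real i \<le> Re (z + of_nat i)" using assms by simp
    also have "\<dots> \<le> norm (z + of_nat i)" by (rule complex_Re_le_cmod)
    finally show "c + real i \<le> norm (z + of_nat i)" .
  qed
  also have "\<dots> = norm (pochhammer z k)" by (simp add: pochhammer_prod atLeast0LessThan prod_norm)
  finally show ?thesis .
qed

lemma norm_pochhammer_quotient_le:
  fixes \<alpha> :: complex assumes a: "a > 0" "Re \<alpha> \<ge> a" and fL: "f \<le> L"
  shows "norm (pochhammer \<alpha> f / of_nat (fact f) * of_nat (fact L) / pochhammer \<alpha> (L+1))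
    \<le> poch_weight a f L"
proof -
  define k where "k = L + 1 - f"
  have Lk: "L + 1 = f + k" using fL by (simp add: k_def)
  have e1: "pochhammer \<alpha> (L+1) = pochhammer \<alpha> f * pochhammer (\<alpha> + of_nat f) k"
    unfolding Lk by (rule pochhammer_product')
  have e2: "pochhammer a (L+1) = pochhammer a f * pochhammer (a + of_nat f) k"
    unfolding Lk by (rule pochhammer_product')
  have pos: "pochhammer a f > 0" "pochhammer (a + of_nat f) k > 0" using a by (auto intro!: pochhammer_pos)
  have "norm (pochhammer \<alpha> f) \<ge> pochhammer a f" using norm_pochhammer_ge[OF a(2) a(1)] by simp
  then have nz: "pochhammer \<alpha> f \<noteq> 0" using pos by auto
  have ge: "norm (pochhammer (\<alpha> + of_nat f) k) \<ge> pochhammer (a + of_nat f) k"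
    using a by (intro norm_pochhammer_ge) auto
  have "pochhammer \<alpha> f / of_nat (fact f) * of_nat (fact L) / pochhammer \<alpha> (L+1)
      = of_nat (fact L) / (of_nat (fact f) * pochhammer (\<alpha> + of_nat f) k)"
    unfolding e1 using nz by (simp add: field_simps)
  then have "norm (pochhammer \<alpha> f / of_nat (fact f) * of_nat (fact L) / pochhammer \<alpha> (L+1))
      = fact L / (fact f * norm (pochhammer (\<alpha> + of_nat f) k))"
    by (simp add: norm_divide norm_mult)
  also have "\<dots> \<le> fact L / (fact f * pochhammer (a + of_nat f) k)"
    using ge pos by (intro divide_left_mono mult_left_mono mult_pos_pos) auto
  also have "\<dots> = poch_weight a f L"
    unfolding poch_weight_def e2 using pos by (simp add: field_simps)
  finally show ?thesis .
qed

text \<open>Real counterparts of Z_term, Z and S: for real a > 0 they are Z(k; a) and S_l(k; a), and they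
  dominate the complex values in modulus when Re \<alpha> \<ge> a.\<close>

definition Z_real_term :: "nat list \<Rightarrow> real \<Rightarrow> nat list \<Rightarrow> real" where
  "Z_real_term ks a ms = poch_weight a (hd ms) (last ms)
     * (\<Prod>j<length ks - 1. 1 / (real (ms ! j) + a) ^ (ks ! j))
     * (1 / (real (last ms) + a) ^ (last ks - 1))"

definition Z_real :: "nat list \<Rightarrow> real \<Rightarrow> real" where
  "Z_real ks a = infsum (Z_real_term ks a) (incr_lists (length ks))"

definition S_real :: "nat \<Rightarrow> nat list \<Rightarrow> real \<Rightarrow> real" where
  "S_real l ks a = (\<Sum>ls\<in>{ls. length ls = length ks \<and> sum_list ls = l}. Z_real (map2 (+) ks ls) a)"

lemma Z_real_term_nonneg: "a > 0 \<Longrightarrow> 0 \<le> Z_real_term ks a ms"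
  unfolding Z_real_term_def by (intro mult_nonneg_nonneg poch_weight_nonneg prod_nonneg) auto

lemma Z_real_nonneg: "a > 0 \<Longrightarrow> 0 \<le> Z_real ks a"
  unfolding Z_real_def by (intro infsum_nonneg Z_real_term_nonneg)

lemma S_real_nonneg: "a > 0 \<Longrightarrow> 0 \<le> S_real l ks a"
  unfolding S_real_def by (intro sum_nonneg Z_real_nonneg)

lemma norm_Z_term_le:
  fixes \<alpha> :: complex
  assumes a: "a > 0" "Re \<alpha> \<ge> a" and ms: "ms \<in> incr_lists (length ks)" and ks: "ks \<noteq> []"
  shows "norm (Z_term ks \<alpha> ms) \<le> Z_real_term ks a ms"
proof -
  have "ms \<noteq> []" using ms ks by (auto simp: incr_lists_def)
  then have hl: "hd ms \<le> last ms" using incr_lists_hd_le_le_last[OF ms last_in_set] by blast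
  have inv: "norm (1 / (of_nat m + \<alpha>) ^ k) \<le> 1 / (real m + a) ^ k" for m k
  proof -
    have "real m + a \<le> Re (of_nat m + \<alpha>)" using a by simp
    also have "\<dots> \<le> norm (of_nat m + \<alpha>)" by (rule complex_Re_le_cmod)
    finally have "real m + a \<le> norm (of_nat m + \<alpha>)" .
    then have "1 / norm (of_nat m + \<alpha>) ^ k \<le> 1 / (real m + a) ^ k"
      using a by (intro divide_left_mono power_mono mult_pos_pos zero_less_power) auto
    then show ?thesis by (simp add: norm_divide norm_power)
  qed
  have "norm (Z_term ks \<alpha> ms) = norm (pochhammer \<alpha> (hd ms) / of_nat (fact (hd ms))
        * of_nat (fact (last ms)) / pochhammer \<alpha> (last ms + 1))
      * (\<Prod>j<length ks - 1. norm (1 / (of_nat (ms ! j) + \<alpha>) ^ (ks ! j)))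
      * norm (1 / (of_nat (last ms) + \<alpha>) ^ (last ks - 1))"
    unfolding Z_term_def by (simp only: norm_mult prod_norm[symmetric])
  also have "\<dots> \<le> Z_real_term ks a ms"
    unfolding Z_real_term_def using norm_pochhammer_quotient_le[OF a hl] inv a(1)
    by (intro mult_mono prod_mono conjI)
      (auto intro!: mult_nonneg_nonneg prod_nonneg poch_weight_nonneg add_nonneg_nonneg)
  finally show ?thesis .
qed

definition index_excess :: "nat list \<Rightarrow> nat" where
  "index_excess ks = sum_list (map (\<lambda>k. k - 1) ks)"

lemma inverse_power_le:
  fixes a x :: real assumes "0 < a" "a \<le> x" "k \<ge> 1"
  shows "1 / x ^ k \<le> 1 / x * max 1 (1/a) ^ (k - 1)"
proof -
  have x: "x > 0" using assms by simp
  have "1 / x \<le> 1 / a" using assms by (intro divide_left_mono) auto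
  then have "(1 / x) ^ (k - 1) \<le> max 1 (1/a) ^ (k - 1)" using x by (intro power_mono) auto
  then have "1 / x * (1 / x) ^ (k - 1) \<le> 1 / x * max 1 (1/a) ^ (k - 1)"
    using x by (intro mult_left_mono) auto
  moreover have "1 / x ^ k = 1 / x * (1 / x) ^ (k - 1)"
    using assms by (metis One_nat_def Suc_diff_le diff_Suc_1 power_Suc power_one_over)
  ultimately show ?thesis by simp
qed

lemma Z_real_term_le_Z_ones_term:
  fixes a :: real
  assumes a: "a > 0" and ks: "admissible ks" and len: "length ms = length ks"
  shows "Z_real_term ks a ms \<le> max 1 (1/a) ^ index_excess ks * Z_ones_term a a ms"
proof -
  define D where "D = max 1 (1/a)"
  define N where "N = length ks"
  have ne: "ks \<noteq> []" "ms \<noteq> []" and lastK: "last ks \<ge> 2" using ks len by (auto simp: admissible_def)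
  have N: "N = Suc (N - 1)" using ne by (simp add: N_def)
  have D1: "D \<ge> 1" by (simp add: D_def)
  have lastks: "last ks = ks ! (N - 1)" and lastms: "last ms = ms ! (N - 1)"
    using ne len by (simp_all add: last_conv_nth N_def)
  have Kj: "ks ! j \<ge> 1" if "j < N" for j using ks that by (simp add: admissible_def N_def Suc_le_eq)
  have P1: "(\<Prod>j<N - 1. 1 / (real (ms ! j) + a) ^ (ks ! j))
      \<le> (\<Prod>j<N - 1. 1 / (real (ms ! j) + a) * D ^ (ks ! j - 1))"
    unfolding D_def using a by (intro prod_mono conjI inverse_power_le Kj) auto
  have "1 / (real (last ms) + a) ^ (last ks - 1) \<le> 1 / (real (last ms) + a) * D ^ (last ks - 1 - 1)"
    unfolding D_def using a lastK by (intro inverse_power_le) auto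
  also have "\<dots> \<le> 1 / (real (last ms) + a) * D ^ (last ks - 1)"
    using D1 a by (intro mult_left_mono power_increasing) auto
  finally have P2: "1 / (real (last ms) + a) ^ (last ks - 1) \<le> 1 / (real (last ms) + a) * D ^ (last ks - 1)" .
  have "Z_real_term ks a ms \<le> poch_weight a (hd ms) (last ms)
      * (\<Prod>j<N - 1. 1 / (real (ms ! j) + a) * D ^ (ks ! j - 1))
      * (1 / (real (last ms) + a) * D ^ (last ks - 1))"
    unfolding Z_real_term_def N_def[symmetric] using P1 P2 a D1
    by (intro mult_mono) (auto intro!: mult_nonneg_nonneg poch_weight_nonneg prod_nonneg)
  also have "\<dots> = poch_weight a (hd ms) (last ms)
      * ((\<Prod>j<N - 1. 1 / (real (ms ! j) + a)) * (1 / (real (ms ! (N - 1)) + a)))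
      * (D ^ (\<Sum>j<N - 1. ks ! j - 1) * D ^ (ks ! (N - 1) - 1))"
    unfolding prod.distrib power_sum lastks lastms by (simp only: mult_ac)
  also have "(\<Prod>j<N - 1. 1 / (real (ms ! j) + a)) * (1 / (real (ms ! (N - 1)) + a))
      = (\<Prod>j<length ms. 1 / (real (ms ! j) + a))"
    using N len by (metis N_def prod.lessThan_Suc)
  also have "D ^ (\<Sum>j<N - 1. ks ! j - 1) * D ^ (ks ! (N - 1) - 1) = D ^ index_excess ks"
  proof -
    have "(\<Sum>j<N - 1. ks ! j - 1) + (ks ! (N - 1) - 1) = (\<Sum>j<N. ks ! j - 1)"
      using N by (metis sum.lessThan_Suc)
    also have "\<dots> = index_excess ks"
      by (simp add: index_excess_def sum_list_sum_nth atLeast0LessThan N_def)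
    finally show ?thesis by (metis power_add)
  qed
  finally show ?thesis by (simp add: Z_ones_term_def D_def mult_ac)
qed

lemma last_map2_add:
  assumes "ks \<noteq> []" "length e = length ks"
  shows "last (map2 (+) ks e) = last ks + last e"
proof -
  have "map2 (+) ks e \<noteq> []" "e \<noteq> []" using assms by auto
  then show ?thesis using assms by (simp add: last_conv_nth)
qed

lemma admissible_map2_add:
  assumes "admissible ks" "length e = length ks"
  shows "admissible (map2 (+) ks e)"
proof -
  have ks: "ks \<noteq> []" "\<forall>k\<in>set ks. k > 0" "last ks \<ge> 2" using assms by (auto simp: admissible_def)
  have "k > 0" if k: "k \<in> set (map2 (+) ks e)" for k
  proof -
    obtain j where "j < length ks" "k = ks ! j + e ! j" using k assms by (auto simp: in_set_conv_nth)
    then show ?thesis using ks by auto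
  qed
  then show ?thesis using ks last_map2_add[OF ks(1) assms(2)] assms by (auto simp: admissible_def)
qed

lemma Z_real_term_map2_add:
  fixes a :: real
  assumes ks: "ks \<noteq> []" "last ks \<ge> 1" and le: "length e = length ks" and lm: "length ms = length ks"
  shows "Z_real_term (map2 (+) ks e) a ms
    = Z_real_term ks a ms * (\<Prod>j<length ks. (1 / (real (ms ! j) + a)) ^ (e ! j))"
proof -
  define N where "N = length ks"
  define x where "x j = 1 / (real (ms ! j) + a)" for j
  have N: "Suc (N - 1) = N" using ks by (cases ks) (auto simp: N_def)
  have "ms \<noteq> []" "e \<noteq> []" using ks(1) lm le by auto
  then have lastms: "last ms = ms ! (N - 1)" and laste: "last e = e ! (N - 1)"
    using lm le by (simp_all add: last_conv_nth N_def)
  have pw: "1 / y ^ (k + l) = 1 / y ^ k * (1 / y) ^ l" for y :: real and k l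
    unfolding power_add power_one_over by (simp only: divide_inverse mult_1_left inverse_mult_distrib)
  have "(\<Prod>j<N - 1. 1 / (real (ms ! j) + a) ^ (map2 (+) ks e ! j))
      = (\<Prod>j<N - 1. 1 / (real (ms ! j) + a) ^ (ks ! j)) * (\<Prod>j<N - 1. x j ^ (e ! j))"
    unfolding prod.distrib[symmetric] x_def using le by (intro prod.cong refl) (simp add: N_def pw)
  moreover have "1 / (real (last ms) + a) ^ (last (map2 (+) ks e) - 1)
      = 1 / (real (last ms) + a) ^ (last ks - 1) * x (N - 1) ^ (e ! (N - 1))"
  proof -
    have "last (map2 (+) ks e) - 1 = (last ks - 1) + last e" using last_map2_add[OF ks(1) le] ks(2) by simp
    then show ?thesis unfolding x_def lastms laste by (simp only: pw)
  qed
  ultimately have "Z_real_term (map2 (+) ks e) a ms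
      = Z_real_term ks a ms * ((\<Prod>j<N - 1. x j ^ (e ! j)) * x (N - 1) ^ (e ! (N - 1)))"
    unfolding Z_real_term_def using le by (simp add: N_def mult_ac)
  also have "(\<Prod>j<N - 1. x j ^ (e ! j)) * x (N - 1) ^ (e ! (N - 1)) = (\<Prod>j<N. x j ^ (e ! j))"
    using prod.lessThan_Suc[of "\<lambda>j. x j ^ (e ! j)" "N - 1", symmetric] unfolding N .
  finally show ?thesis by (simp add: N_def x_def)
qed

lemma Z_real_term_summable:
  assumes ks: "admissible ks" and a: "a > 0"
  shows "Z_real_term ks a summable_on incr_lists (length ks)"
proof (rule summable_on_comparison_test)
  have "length ks \<ge> 1" using ks by (cases ks) (auto simp: admissible_def)
  then show "(\<lambda>ms. max 1 (1/a) ^ index_excess ks * Z_ones_term a a ms) summable_on incr_lists (length ks)"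
    using a by (intro summable_on_cmult_right Z_ones_term_summable) auto
qed (use Z_real_term_le_Z_ones_term[OF a ks] Z_real_term_nonneg[OF a] in \<open>auto simp: incr_lists_def\<close>)

lemma norm_Z_le_Z_real:
  fixes \<alpha> :: complex
  assumes ks: "admissible ks" and a: "a > 0" "Re \<alpha> \<ge> a"
  shows "norm (Z ks \<alpha>) \<le> Z_real ks a"
proof -
  have ne: "ks \<noteq> []" using ks by (simp add: admissible_def)
  have sm: "Z_real_term ks a summable_on incr_lists (length ks)" by (rule Z_real_term_summable[OF ks a(1)])
  have le: "norm (Z_term ks \<alpha> ms) \<le> Z_real_term ks a ms" if "ms \<in> incr_lists (length ks)" for ms
    by (rule norm_Z_term_le[OF a that ne])
  have abs: "(\<lambda>ms. norm (Z_term ks \<alpha> ms)) summable_on incr_lists (length ks)"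
    by (rule summable_on_comparison_test[OF sm]) (use le in auto)
  have "norm (Z ks \<alpha>) \<le> infsum (\<lambda>ms. norm (Z_term ks \<alpha> ms)) (incr_lists (length ks))"
    unfolding Z_def incr_lists_def[symmetric] by (rule norm_infsum_bound[OF abs])
  also have "\<dots> \<le> Z_real ks a"
    unfolding Z_real_def by (rule infsum_mono[OF abs sm]) (use le in auto)
  finally show ?thesis .
qed

lemma norm_S_le_S_real:
  fixes \<alpha> :: complex
  assumes ks: "admissible ks" and a: "a > 0" "Re \<alpha> \<ge> a"
  shows "norm (S l ks \<alpha>) \<le> S_real l ks a"
  unfolding S_def S_real_def
  by (rule order_trans[OF norm_sum sum_mono]) (auto intro!: norm_Z_le_Z_real admissible_map2_add ks a)

lemma Z_real_map2_add_le:
  assumes ks: "admissible ks" and le: "length e = length ks" and a: "a > 0"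
  shows "Z_real (map2 (+) ks e) a \<le> (1/a) ^ sum_list e * Z_real ks a"
proof -
  define N where "N = length ks"
  have ne: "ks \<noteq> []" "last ks \<ge> 1" using ks by (auto simp: admissible_def)
  have sm': "Z_real_term (map2 (+) ks e) a summable_on incr_lists N"
    using Z_real_term_summable[OF admissible_map2_add[OF ks le] a] le by (simp add: N_def)
  have sm: "Z_real_term ks a summable_on incr_lists N"
    using Z_real_term_summable[OF ks a] by (simp add: N_def)
  have "length (map2 (+) ks e) = N" using le by (simp add: N_def)
  then have "Z_real (map2 (+) ks e) a = infsum (Z_real_term (map2 (+) ks e) a) (incr_lists N)"
    by (simp add: Z_real_def)
  also have "\<dots> \<le> infsum (\<lambda>ms. (1/a) ^ sum_list e * Z_real_term ks a ms) (incr_lists N)"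
  proof (rule infsum_mono[OF sm' summable_on_cmult_right[OF sm]])
    fix ms assume "ms \<in> incr_lists N"
    then have lm: "length ms = length ks" by (simp add: incr_lists_def N_def)
    have "Z_real_term (map2 (+) ks e) a ms = Z_real_term ks a ms * (\<Prod>j<N. (1 / (real (ms ! j) + a)) ^ (e ! j))"
      unfolding N_def using ne le lm by (rule Z_real_term_map2_add)
    also have "\<dots> \<le> Z_real_term ks a ms * (\<Prod>j<N. (1/a) ^ (e ! j))"
      using a Z_real_term_nonneg[OF a]
      by (intro mult_left_mono prod_mono conjI power_mono) (auto intro!: divide_left_mono)
    also have "(\<Prod>j<N. (1/a) ^ (e ! j)) = (1/a) ^ sum_list e"
      using le by (simp add: power_sum sum_list_sum_nth atLeast0LessThan N_def)
    finally show "Z_real_term (map2 (+) ks e) a ms \<le> (1/a) ^ sum_list e * Z_real_term ks a ms"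
      by (simp add: mult_ac)
  qed
  also have "\<dots> = (1/a) ^ sum_list e * Z_real ks a"
    unfolding Z_real_def N_def by (rule infsum_cmult_right) (use sm in \<open>simp add: N_def\<close>)
  finally show ?thesis .
qed

lemma Z_ones_term_geometric:
  assumes "0 \<le> \<rho>" "\<rho> < a"
  shows "Z_ones_term a a ms * (\<Prod>j<length ms. 1 / (1 - \<rho> / (real (ms ! j) + a))) = Z_ones_term a (a - \<rho>) ms"
proof -
  have "1 / (real (ms ! j) + a) * (1 / (1 - \<rho> / (real (ms ! j) + a))) = 1 / (real (ms ! j) + (a - \<rho>))" for j
    using assms by (simp add: field_simps)
  then show ?thesis unfolding Z_ones_term_def by (simp add: mult.assoc prod.distrib[symmetric])
qed

lemma Z_real_term_weighted_le:
  assumes a: "a > 0" and \<rho>: "0 \<le> \<rho>" "\<rho> < a"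
  shows "0 \<le> Z_real_term ks a ms * (\<Prod>j<length ks. (\<rho> / (real (ms ! j) + a)) ^ (ls ! j))
    \<and> Z_real_term ks a ms * (\<Prod>j<length ks. (\<rho> / (real (ms ! j) + a)) ^ (ls ! j)) \<le> Z_real_term ks a ms"
proof -
  define x where "x j = \<rho> / (real (ms ! j) + a)" for j
  have q: "0 \<le> x j \<and> x j < 1" for j using a \<rho> by (auto simp: x_def divide_simps)
  have "0 \<le> (\<Prod>j<length ks. x j ^ (ls ! j))" "(\<Prod>j<length ks. x j ^ (ls ! j)) \<le> 1"
    using q by (auto intro!: prod_nonneg prod_le_1 power_le_one simp: less_imp_le)
  then show ?thesis using Z_real_term_nonneg[OF a, of ks ms] by (simp add: x_def mult_left_le)
qed

lemma power_sum_list_mult_Z_real: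
  assumes ks: "admissible ks" and a: "a > 0" and ls: "length ls = length ks"
  shows "\<rho> ^ sum_list ls * Z_real (map2 (+) ks ls) a
    = infsum (\<lambda>ms. Z_real_term ks a ms * (\<Prod>j<length ks. (\<rho> / (real (ms ! j) + a)) ^ (ls ! j)))
        (incr_lists (length ks))"
proof -
  have ne: "ks \<noteq> []" "last ks \<ge> 1" using ks by (auto simp: admissible_def)
  have sm: "Z_real_term (map2 (+) ks ls) a summable_on incr_lists (length ks)"
    using Z_real_term_summable[OF admissible_map2_add[OF ks ls] a] ls by simp
  have "\<rho> ^ sum_list ls * Z_real_term (map2 (+) ks ls) a ms
      = Z_real_term ks a ms * (\<Prod>j<length ks. (\<rho> / (real (ms ! j) + a)) ^ (ls ! j))"
    if "ms \<in> incr_lists (length ks)" for ms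
  proof -
    have "\<rho> ^ sum_list ls = (\<Prod>j<length ks. \<rho> ^ (ls ! j))"
      using ls by (simp add: power_sum sum_list_sum_nth atLeast0LessThan)
    moreover have "length ms = length ks" using that by (simp add: incr_lists_def)
    ultimately show ?thesis unfolding Z_real_term_map2_add[OF ne ls \<open>length ms = length ks\<close>]
      by (simp add: prod.distrib[symmetric] power_mult_distrib[symmetric] mult_ac)
  qed
  then have "infsum (\<lambda>ms. \<rho> ^ sum_list ls * Z_real_term (map2 (+) ks ls) a ms) (incr_lists (length ks))
      = infsum (\<lambda>ms. Z_real_term ks a ms * (\<Prod>j<length ks. (\<rho> / (real (ms ! j) + a)) ^ (ls ! j)))
          (incr_lists (length ks))" by (rule infsum_cong)
  then show ?thesis unfolding Z_real_def using infsum_cmult_right[OF sm] ls by simp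
qed

text \<open>Summing the weights (\<rho>/(m_j + a))^(l_j) over all l is a product of geometric series, which
  moves the poles 1/(m_j + a) to 1/(m_j + a - \<rho>).\<close>

lemma sum_Z_real_term_weighted_le:
  assumes ks: "admissible ks" and a: "a > 0" and \<rho>: "0 \<le> \<rho>" "\<rho> < a"
    and lm: "length ms = length ks" and A: "A \<subseteq> lists_below (length ks) R"
  shows "(\<Sum>ls\<in>A. Z_real_term ks a ms * (\<Prod>j<length ks. (\<rho> / (real (ms ! j) + a)) ^ (ls ! j)))
    \<le> max 1 (1/a) ^ index_excess ks * Z_ones_term a (a - \<rho>) ms"
proof -
  define D where "D = max 1 (1/a) ^ index_excess ks"
  define x where "x j = \<rho> / (real (ms ! j) + a)" for j
  have q: "0 \<le> x j \<and> x j < 1" for j using a \<rho> by (auto simp: x_def divide_simps)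
  have "(\<Sum>ls\<in>A. Z_real_term ks a ms * (\<Prod>j<length ks. x j ^ (ls ! j)))
      = Z_real_term ks a ms * (\<Sum>ls\<in>A. \<Prod>j<length ks. x j ^ (ls ! j))"
    by (simp add: sum_distrib_left)
  also have "\<dots> \<le> D * Z_ones_term a a ms * (\<Prod>j<length ks. 1 / (1 - x j))"
    using Z_real_term_le_Z_ones_term[OF a ks lm] sum_prod_power_le[OF _ A, of x] q Z_real_term_nonneg[OF a]
    by (intro mult_mono) (auto simp: D_def intro!: sum_nonneg prod_nonneg mult_nonneg_nonneg Z_ones_term_nonneg a)
  also have "\<dots> = D * Z_ones_term a (a - \<rho>) ms"
    using Z_ones_term_geometric[OF \<rho>, of ms] lm by (simp add: x_def mult.assoc)
  finally show ?thesis by (simp add: x_def D_def)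
qed

lemma sum_S_real_le:
  fixes a \<rho> :: real
  assumes ks: "admissible ks" and a: "a > 0" and \<rho>: "0 \<le> \<rho>" "\<rho> < a"
  shows "(\<Sum>r<R. \<rho> ^ r * S_real r ks a)
    \<le> max 1 (1/a) ^ index_excess ks * infsum (Z_ones_term a (a - \<rho>)) (incr_lists (length ks))"
proof -
  define N where "N = length ks"
  define D where "D = max 1 (1/a) ^ index_excess ks"
  define JJ where "JJ = {ls. length ls = N \<and> sum_list ls < R}"
  define F where "F ls ms = Z_real_term ks a ms * (\<Prod>j<N. (\<rho> / (real (ms ! j) + a)) ^ (ls ! j))" for ls ms
  have "N \<ge> 1" using ks by (cases ks) (auto simp: N_def admissible_def)
  have JJ: "JJ \<subseteq> lists_below N R" by (auto simp: JJ_def intro: lists_below_if_sum_list_less)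
  have finJJ: "finite JJ" using finite_subset[OF JJ finite_lists_below] .
  have F_le: "0 \<le> F ls ms \<and> F ls ms \<le> Z_real_term ks a ms" for ls ms
    unfolding F_def N_def by (rule Z_real_term_weighted_le[OF a \<rho>])
  have smF: "F ls summable_on incr_lists N" for ls
    by (rule summable_on_comparison_test[of "Z_real_term ks a"])
      (use Z_real_term_summable[OF ks a] F_le in \<open>simp_all add: N_def\<close>)
  have "(\<Sum>r<R. \<rho> ^ r * S_real r ks a)
      = (\<Sum>r<R. \<Sum>ls\<in>{ls. length ls = N \<and> sum_list ls = r}. \<rho> ^ sum_list ls * Z_real (map2 (+) ks ls) a)"
    unfolding S_real_def N_def sum_distrib_left by (intro sum.cong refl) auto
  also have "\<dots> = (\<Sum>ls\<in>JJ. infsum (F ls) (incr_lists N))"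
    unfolding sum_group_by_sum_list JJ_def
  proof (rule sum.cong[OF refl])
    fix ls assume "ls \<in> {ls. length ls = N \<and> sum_list ls < R}"
    then show "\<rho> ^ sum_list ls * Z_real (map2 (+) ks ls) a = infsum (F ls) (incr_lists N)"
      unfolding F_def N_def by (intro power_sum_list_mult_Z_real[OF ks a]) (simp add: N_def)
  qed
  also have "\<dots> = infsum (\<lambda>ms. \<Sum>ls\<in>JJ. F ls ms) (incr_lists N)"
    by (rule infsum_finite_sum(1)[symmetric]) (use finJJ smF in auto)
  also have "\<dots> \<le> infsum (\<lambda>ms. D * Z_ones_term a (a - \<rho>) ms) (incr_lists N)"
  proof (rule infsum_mono)
    show "(\<lambda>ms. \<Sum>ls\<in>JJ. F ls ms) summable_on incr_lists N"
      by (rule infsum_finite_sum(2)) (use finJJ smF in auto)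
    show "(\<lambda>ms. D * Z_ones_term a (a - \<rho>) ms) summable_on incr_lists N"
      using \<rho> \<open>N \<ge> 1\<close> by (intro summable_on_cmult_right Z_ones_term_summable) auto
    show "(\<Sum>ls\<in>JJ. F ls ms) \<le> D * Z_ones_term a (a - \<rho>) ms" if "ms \<in> incr_lists N" for ms
    proof -
      have "length ms = length ks" using that by (simp add: incr_lists_def N_def)
      from sum_Z_real_term_weighted_le[OF ks a \<rho> this JJ[unfolded N_def]]
      show ?thesis unfolding F_def D_def N_def .
    qed
  qed
  also have "\<dots> = D * infsum (Z_ones_term a (a - \<rho>)) (incr_lists N)"
    by (rule infsum_cmult_right) (use \<rho> \<open>N \<ge> 1\<close> in \<open>auto intro!: Z_ones_term_summable\<close>)
  finally show ?thesis by (simp add: D_def N_def)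
qed

lemma sum_power_sum_list_levels_le:
  fixes q :: real assumes "0 \<le> q" "q < 1"
  shows "(\<Sum>r<L. \<Sum>xs\<in>{xs. length xs = N \<and> sum_list xs = r}. q ^ sum_list xs) \<le> (1 / (1 - q)) ^ N"
  unfolding sum_group_by_sum_list
  by (rule sum_power_sum_list_le[OF assms]) (auto intro: lists_below_if_sum_list_less)

section \<open>The two series\<close>

text \<open>Both series have the shape (\<alpha> - \<beta>)^l \<Sum>_{i \<le> l} \<Sum>_{x \<in> A i} S_{l-i}(idx x; \<alpha>); replacing
  \<alpha> - \<beta> by \<rho> and S by S_real gives a majorant independent of \<alpha>.\<close>

definition series_majorant :: "(nat \<Rightarrow> 'x set) \<Rightarrow> ('x \<Rightarrow> nat list) \<Rightarrow> real \<Rightarrow> real \<Rightarrow> nat \<Rightarrow> real" where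
  "series_majorant A idx a \<rho> l = \<rho> ^ l * (\<Sum>i\<le>l. \<Sum>x\<in>A i. S_real (l - i) (idx x) a)"

lemma norm_series_term_le:
  fixes \<alpha> \<beta> :: complex
  assumes adm: "\<And>i x. x \<in> A i \<Longrightarrow> admissible (idx x)" and a: "0 < a" "a \<le> Re \<alpha>"
    and \<rho>: "cmod (\<alpha> - \<beta>) \<le> \<rho>"
  shows "norm ((\<alpha> - \<beta>) ^ l * (\<Sum>i\<le>l. \<Sum>x\<in>A i. S (l - i) (idx x) \<alpha>)) \<le> series_majorant A idx a \<rho> l"
proof -
  have "norm (\<Sum>i\<le>l. \<Sum>x\<in>A i. S (l - i) (idx x) \<alpha>) \<le> (\<Sum>i\<le>l. \<Sum>x\<in>A i. norm (S (l - i) (idx x) \<alpha>))"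
    by (rule order_trans[OF norm_sum sum_mono]) (rule norm_sum)
  also have "\<dots> \<le> (\<Sum>i\<le>l. \<Sum>x\<in>A i. S_real (l - i) (idx x) a)"
    by (intro sum_mono norm_S_le_S_real adm a)
  finally have "norm (\<Sum>i\<le>l. \<Sum>x\<in>A i. S (l - i) (idx x) \<alpha>) \<le> (\<Sum>i\<le>l. \<Sum>x\<in>A i. S_real (l - i) (idx x) a)" .
  moreover have "cmod (\<alpha> - \<beta>) ^ l \<le> \<rho> ^ l" using \<rho> by (intro power_mono) auto
  moreover have "0 \<le> \<rho>" using \<rho> norm_ge_zero order_trans by blast
  ultimately show ?thesis unfolding series_majorant_def norm_mult norm_power
    by (intro mult_mono) auto
qed

lemma summable_series_majorant:
  assumes a: "0 < a" and \<rho>: "0 \<le> \<rho>"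
    and bound: "\<And>L. (\<Sum>i<L. \<Sum>x\<in>A i. \<rho> ^ i * (\<Sum>r<L. \<rho> ^ r * S_real r (idx x) a)) \<le> B"
  shows "summable (series_majorant A idx a \<rho>)"
proof (rule summableI_nonneg_bounded)
  fix l show "0 \<le> series_majorant A idx a \<rho> l"
    unfolding series_majorant_def using \<rho> a by (intro mult_nonneg_nonneg sum_nonneg S_real_nonneg) auto
next
  fix L
  define f where "f i r = (\<Sum>x\<in>A i. \<rho> ^ i * (\<rho> ^ r * S_real r (idx x) a))" for i r
  have f_nonneg: "f i r \<ge> 0" for i r
    unfolding f_def using a \<rho> by (intro sum_nonneg mult_nonneg_nonneg S_real_nonneg) auto
  have "series_majorant A idx a \<rho> l = (\<Sum>i\<le>l. f i (l - i))" for l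
    unfolding series_majorant_def f_def sum_distrib_left
  proof (intro sum.cong refl)
    fix i x assume "i \<in> {..l}"
    then have "\<rho> ^ l = \<rho> ^ i * \<rho> ^ (l - i)" by (simp add: power_add[symmetric])
    then show "\<rho> ^ l * S_real (l - i) (idx x) a = \<rho> ^ i * (\<rho> ^ (l - i) * S_real (l - i) (idx x) a)"
      by simp
  qed
  then have "(\<Sum>l<L. series_majorant A idx a \<rho> l) = (\<Sum>(i, r)\<in>{(i, r). i + r < L}. f i r)"
    by (simp add: sum.triangle_reindex)
  also have "\<dots> \<le> (\<Sum>(i, r)\<in>{..<L} \<times> {..<L}. f i r)"
    using f_nonneg by (intro sum_mono2) auto
  also have "\<dots> = (\<Sum>i<L. \<Sum>x\<in>A i. \<rho> ^ i * (\<Sum>r<L. \<rho> ^ r * S_real r (idx x) a))"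
    unfolding sum.cartesian_product[symmetric] f_def
    by (intro sum.cong refl) (simp add: sum.swap[of _ "{..<L}"] sum_distrib_left)
  also have "\<dots> \<le> B" by (rule bound)
  finally show "(\<Sum>l<L. series_majorant A idx a \<rho> l) \<le> B" .
qed

lemma ins_ones_aux:
  "length xs = length ys \<Longrightarrow>
    length (concat (map (\<lambda>(k, i). k # replicate i (1::nat)) (zip xs ys))) = length xs + sum_list ys
  \<and> index_excess (concat (map (\<lambda>(k, i). k # replicate i (1::nat)) (zip xs ys))) = index_excess xs
  \<and> set (concat (map (\<lambda>(k, i). k # replicate i (1::nat)) (zip xs ys))) \<subseteq> set xs \<union> {1}"
proof (induction xs arbitrary: ys)
  case (Cons x xs)
  then obtain y ys' where ys: "ys = y # ys'" by (cases ys) auto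
  with Cons.prems have "length xs = length ys'" by simp
  from Cons.IH[OF this] show ?case using ys by (auto simp: index_excess_def)
qed (simp add: index_excess_def)

lemma admissible_ins_ones:
  assumes ks: "admissible ks" and len: "length is = length ks - 1"
  shows "admissible (ins_ones ks is)"
    and "length (ins_ones ks is) = length ks + sum_list is"
    and "index_excess (ins_ones ks is) = index_excess ks"
proof -
  have ne: "ks \<noteq> []" using ks by (simp add: admissible_def)
  have A: "length (concat (map (\<lambda>(k, i). k # replicate i (1::nat)) (zip (butlast ks) is)))
      = length (butlast ks) + sum_list is"
    "index_excess (concat (map (\<lambda>(k, i). k # replicate i (1::nat)) (zip (butlast ks) is)))
      = index_excess (butlast ks)"
    "set (concat (map (\<lambda>(k, i). k # replicate i (1::nat)) (zip (butlast ks) is))) \<subseteq> set (butlast ks) \<union> {1}"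
    using ins_ones_aux[of "butlast ks" "is"] len by auto
  show "length (ins_ones ks is) = length ks + sum_list is"
    unfolding ins_ones_def using A ne by (cases ks) auto
  have ks_eq: "ks = butlast ks @ [last ks]" using ne by simp
  have "index_excess ks = index_excess (butlast ks) + (last ks - 1)"
    by (subst ks_eq) (simp add: index_excess_def)
  then show "index_excess (ins_ones ks is) = index_excess ks"
    unfolding ins_ones_def using A by (simp add: index_excess_def)
  show "admissible (ins_ones ks is)"
    using A(3) ks by (auto simp: ins_ones_def admissible_def dest: in_set_butlastD)
qed

lemma series1_majorant_summable:
  assumes ks: "admissible ks" and a: "a > 0" and \<rho>: "0 \<le> \<rho>" "\<rho> < a"
  shows "summable (series_majorant (\<lambda>i. {is. length is = length ks - 1 \<and> sum_list is = i}) (ins_ones ks) a \<rho>)"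
proof -
  define n where "n = length ks"
  define D where "D = max 1 (1/a) ^ index_excess ks"
  define t where "t = (\<rho> + a) / 2"
  have t: "\<rho> < t" "t < a" "t > 0" using \<rho> by (auto simp: t_def)
  obtain C where C: "C \<ge> 0"
    "\<And>N. N \<ge> 1 \<Longrightarrow> infsum (Z_ones_term a (a - \<rho>)) (incr_lists N) \<le> C * (1/t)^N"
    using Z_ones_term_summable_le[of "a - \<rho>" a t] \<rho> t by auto
  have "n \<ge> 1" using ks by (cases ks) (auto simp: admissible_def n_def)
  have D: "D \<ge> 0" by (simp add: D_def)
  have inner: "\<rho> ^ sum_list is * (\<Sum>r<L. \<rho> ^ r * S_real r (ins_ones ks is) a)
      \<le> D * C * (1/t)^n * (\<rho> / t) ^ sum_list is" if "length is = n - 1" for "is" L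
  proof -
    note adm = admissible_ins_ones[OF ks that[unfolded n_def]]
    have "(\<Sum>r<L. \<rho> ^ r * S_real r (ins_ones ks is) a)
        \<le> D * infsum (Z_ones_term a (a - \<rho>)) (incr_lists (n + sum_list is))"
      using sum_S_real_le[OF adm(1) a \<rho>] adm(2,3) by (simp add: D_def n_def)
    also have "\<dots> \<le> D * (C * (1/t) ^ (n + sum_list is))"
      using C(2)[of "n + sum_list is"] \<open>n \<ge> 1\<close> D by (intro mult_left_mono) auto
    finally have "\<rho> ^ sum_list is * (\<Sum>r<L. \<rho> ^ r * S_real r (ins_ones ks is) a)
        \<le> \<rho> ^ sum_list is * (D * (C * (1/t) ^ (n + sum_list is)))"
      using \<rho> by (intro mult_left_mono) auto
    also have "\<dots> = D * C * (1/t)^n * (\<rho> / t) ^ sum_list is"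
      by (simp add: power_add power_divide mult_ac)
    finally show ?thesis .
  qed
  show ?thesis
  proof (rule summable_series_majorant[OF a \<rho>(1)])
    fix L
    have "(\<Sum>i<L. \<Sum>is\<in>{is. length is = length ks - 1 \<and> sum_list is = i}.
          \<rho> ^ i * (\<Sum>r<L. \<rho> ^ r * S_real r (ins_ones ks is) a))
        \<le> (\<Sum>i<L. \<Sum>is\<in>{is. length is = n - 1 \<and> sum_list is = i}. D * C * (1/t)^n * (\<rho> / t) ^ sum_list is)"
      using inner unfolding n_def by (intro sum_mono) auto
    also have "\<dots> \<le> D * C * (1/t)^n * (1 / (1 - \<rho> / t)) ^ (n - 1)"
      unfolding sum_distrib_left[symmetric] using D C t \<rho>
      by (intro mult_left_mono sum_power_sum_list_levels_le) auto
    finally show "(\<Sum>i<L. \<Sum>is\<in>{is. length is = length ks - 1 \<and> sum_list is = i}.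
          \<rho> ^ i * (\<Sum>r<L. \<rho> ^ r * S_real r (ins_ones ks is) a)) \<le> D * C * (1/t)^n * (1 / (1 - \<rho> / t)) ^ (n - 1)" .
  qed
qed

definition block_tuples :: "nat list \<Rightarrow> nat \<Rightarrow> nat list list set" where
  "block_tuples ks i = {iss. length iss = length ks \<and> (\<forall>m<length ks. length (iss ! m) = blk_len ks m)
                            \<and> sum_list (map sum_list iss) = i}"

text \<open>Concatenation identifies block tuples with plain lists of length \<Sum>_m blk_len ks m.\<close>

lemma sum_block_tuples_geometric_le:
  fixes q :: real assumes q: "0 \<le> q" "q < 1"
  shows "(\<Sum>i<L. \<Sum>iss\<in>block_tuples ks i. q ^ i) \<le> (1 / (1 - q)) ^ (\<Sum>m<length ks. blk_len ks m)"
proof -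
  define n where "n = length ks"
  define P where "P = (\<Sum>m<n. blk_len ks m)"
  define Base where "Base = {iss :: nat list list. length iss = n \<and> (\<forall>m<n. length (iss ! m) = blk_len ks m)}"
  define g where "g iss = sum_list (map sum_list iss)" for iss :: "nat list list"
  define B where "B = {x\<in>Base. g x < L}"
  have block_eq: "block_tuples ks i = {x\<in>Base. g x = i}" for i
    by (auto simp: block_tuples_def Base_def g_def n_def)
  have len_concat: "length (concat iss) = P" if "iss \<in> Base" for iss
    using that by (simp add: length_concat sum_list_sum_nth atLeast0LessThan Base_def P_def)
  have sum_concat: "sum_list (concat iss) = g iss" for iss
    by (induction iss) (simp_all add: g_def)
  have img: "concat ` B \<subseteq> lists_below P L"
    using len_concat sum_concat by (auto simp: B_def intro!: lists_below_if_sum_list_less)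
  have inj: "inj_on concat B"
  proof (rule inj_onI)
    fix x y assume "x \<in> B" "y \<in> B" "concat x = concat y"
    moreover have "\<forall>(u, v)\<in>set (zip x y). length u = length v"
      using \<open>x \<in> B\<close> \<open>y \<in> B\<close> by (auto simp: B_def Base_def in_set_zip)
    moreover have "length x = length y" using \<open>x \<in> B\<close> \<open>y \<in> B\<close> by (simp add: B_def Base_def)
    ultimately show "x = y" using concat_eq_concat_iff by metis
  qed
  have finB: "finite B" using finite_subset[OF img finite_lists_below] inj by (simp add: finite_image_iff)
  have "(\<Sum>i<L. \<Sum>iss\<in>block_tuples ks i. q ^ i) = (\<Sum>i<L. \<Sum>iss\<in>{x\<in>Base. g x = i}. q ^ g iss)"
    unfolding block_eq by (intro sum.cong refl) auto
  also have "\<dots> = (\<Sum>iss\<in>B. q ^ g iss)" unfolding B_def by (rule sum_group_by_level) (use finB in \<open>simp add: B_def\<close>)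
  also have "\<dots> = (\<Sum>xs\<in>concat ` B. q ^ sum_list xs)" using inj by (simp add: sum.reindex sum_concat)
  also have "\<dots> \<le> (1 / (1 - q)) ^ P" by (rule sum_power_sum_list_le[OF q img])
  finally show ?thesis by (simp add: P_def n_def)
qed

lemma S_real_map2_add_le:
  assumes ks: "admissible ks" and le: "length e = length ks" and a: "a > 0"
  shows "S_real r (map2 (+) ks e) a
    \<le> (1/a) ^ sum_list e * Z_real ks a * (\<Sum>ls\<in>{ls. length ls = length ks \<and> sum_list ls = r}. (1/a) ^ sum_list ls)"
proof -
  have len: "length (map2 (+) ks e) = length ks" using le by simp
  show ?thesis unfolding S_real_def len sum_distrib_left
  proof (intro sum_mono)
    fix ls assume "ls \<in> {ls. length ls = length ks \<and> sum_list ls = r}"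
    then have ls: "length ls = length ks" by simp
    have "map2 (+) (map2 (+) ks e) ls = map2 (+) ks (map2 (+) e ls)"
      using le ls by (intro nth_equalityI) auto
    moreover have "length e = length ls" using le ls by simp
    then have "sum_list (map2 (+) e ls) = sum_list e + sum_list ls"
      by (induction e ls rule: list_induct2) auto
    ultimately show "Z_real (map2 (+) (map2 (+) ks e) ls) a \<le> (1/a) ^ sum_list e * Z_real ks a * (1/a) ^ sum_list ls"
      using Z_real_map2_add_le[OF ks _ a, of "map2 (+) e ls"] le ls by (simp add: power_add mult_ac)
  qed
qed

lemma series2_majorant_summable:
  assumes ks: "admissible ks" and a: "a > 0" and \<rho>: "0 \<le> \<rho>" "\<rho> < a"
  shows "summable (series_majorant (block_tuples ks) (map2 (\<lambda>k is. k + sum_list is) ks) a \<rho>)"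
proof (rule summable_series_majorant[OF a \<rho>(1)])
  define q where "q = \<rho> / a"
  define G where "G = (1 / (1 - q)) ^ length ks"
  have q: "0 \<le> q" "q < 1" using a \<rho> by (auto simp: q_def divide_simps)
  have G: "G \<ge> 0" using q by (simp add: G_def)
  have Z: "Z_real ks a \<ge> 0" by (rule Z_real_nonneg[OF a])
  fix L
  have "\<rho> ^ i * (\<Sum>r<L. \<rho> ^ r * S_real r (map2 (\<lambda>k is. k + sum_list is) ks iss) a) \<le> Z_real ks a * G * q ^ i"
    if iss: "iss \<in> block_tuples ks i" for i iss
  proof -
    define e where "e = map sum_list iss"
    have e: "length e = length ks" "sum_list e = i" using iss by (auto simp: block_tuples_def e_def)
    have idx: "map2 (\<lambda>k is. k + sum_list is) ks iss = map2 (+) ks e"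
      using e(1) by (intro nth_equalityI) (auto simp: e_def)
    have "(\<Sum>r<L. \<rho> ^ r * S_real r (map2 (+) ks e) a)
        \<le> (\<Sum>r<L. \<rho> ^ r * ((1/a) ^ i * Z_real ks a
            * (\<Sum>ls\<in>{ls. length ls = length ks \<and> sum_list ls = r}. (1/a) ^ sum_list ls)))"
      using S_real_map2_add_le[OF ks e(1) a] e(2) \<rho> by (intro sum_mono mult_left_mono) auto
    also have "\<dots> = (1/a) ^ i * Z_real ks a
        * (\<Sum>r<L. \<Sum>ls\<in>{ls. length ls = length ks \<and> sum_list ls = r}. q ^ sum_list ls)"
      unfolding sum_distrib_left q_def
      by (intro sum.cong refl) (simp add: power_divide mult_ac)
    also have "\<dots> \<le> (1/a) ^ i * Z_real ks a * G"
      unfolding G_def using Z a by (intro mult_left_mono sum_power_sum_list_levels_le q) auto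
    finally have "\<rho> ^ i * (\<Sum>r<L. \<rho> ^ r * S_real r (map2 (+) ks e) a) \<le> \<rho> ^ i * ((1/a) ^ i * Z_real ks a * G)"
      using \<rho> by (intro mult_left_mono) auto
    then show ?thesis unfolding idx by (simp add: q_def power_divide mult_ac)
  qed
  then have "(\<Sum>i<L. \<Sum>iss\<in>block_tuples ks i. \<rho> ^ i * (\<Sum>r<L. \<rho> ^ r * S_real r (map2 (\<lambda>k is. k + sum_list is) ks iss) a))
      \<le> Z_real ks a * G * (\<Sum>i<L. \<Sum>iss\<in>block_tuples ks i. q ^ i)"
    unfolding sum_distrib_left by (intro sum_mono) auto
  also have "\<dots> \<le> Z_real ks a * G * (1 / (1 - q)) ^ (\<Sum>m<length ks. blk_len ks m)"
    using Z G by (intro mult_left_mono sum_block_tuples_geometric_le q) auto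
  finally show "(\<Sum>i<L. \<Sum>iss\<in>block_tuples ks i. \<rho> ^ i * (\<Sum>r<L. \<rho> ^ r * S_real r (map2 (\<lambda>k is. k + sum_list is) ks iss) a))
      \<le> Z_real ks a * G * (1 / (1 - q)) ^ (\<Sum>m<length ks. blk_len ks m)" .
qed

lemma compact_subset_ball_radius:
  fixes \<beta> :: complex
  assumes "compact K" "K \<subseteq> {\<alpha>. cmod (\<alpha> - \<beta>) < R}" "R > 0"
  shows "\<exists>\<rho>. 0 \<le> \<rho> \<and> \<rho> < R \<and> (\<forall>\<alpha>\<in>K. cmod (\<alpha> - \<beta>) \<le> \<rho>)"
proof (cases "K = {}")
  case False
  have "continuous_on K (\<lambda>\<alpha>. cmod (\<alpha> - \<beta>))" by (intro continuous_intros)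
  then obtain x where "x \<in> K" "\<forall>y\<in>K. cmod (y - \<beta>) \<le> cmod (x - \<beta>)"
    using continuous_attains_sup[OF assms(1) False] by blast
  then show ?thesis using assms(2) by (intro exI[of _ "cmod (x - \<beta>)"]) auto
qed (use assms in auto)

lemma series_terms_majorized:
  fixes \<beta> :: complex
  assumes ks: "admissible ks" and \<beta>: "Re \<beta> > 0"
    and K: "compact K" "K \<subseteq> {\<alpha>. cmod (\<alpha> - \<beta>) < Re \<beta> / 2}"
  shows "\<exists>M1 M2. summable M1 \<and> summable M2 \<and> (\<forall>\<alpha>\<in>K. \<forall>l.
           norm (series1_term ks \<beta> \<alpha> l) \<le> M1 l \<and> norm (series2_term ks \<beta> \<alpha> l) \<le> M2 l)"
proof -
  obtain \<rho> where \<rho>: "0 \<le> \<rho>" "\<rho> < Re \<beta> / 2" "\<forall>\<alpha>\<in>K. cmod (\<alpha> - \<beta>) \<le> \<rho>"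
    using compact_subset_ball_radius[OF K] \<beta> by auto
  define a where "a = Re \<beta> - \<rho>"
  have a: "a > 0" "\<rho> < a" using \<rho> by (auto simp: a_def)
  have Re_ge: "a \<le> Re \<alpha>" if "\<alpha> \<in> K" for \<alpha>
    using abs_Re_le_cmod[of "\<alpha> - \<beta>"] \<rho>(3) that by (auto simp: a_def)
  have adm2: "admissible (map2 (\<lambda>k is. k + sum_list is) ks iss)" if "iss \<in> block_tuples ks i" for i iss
  proof -
    have "map2 (\<lambda>k is. k + sum_list is) ks iss = map2 (+) ks (map sum_list iss)"
      using that by (intro nth_equalityI) (auto simp: block_tuples_def)
    then show ?thesis using admissible_map2_add[OF ks] that by (simp add: block_tuples_def)
  qed
  show ?thesis
  proof (intro exI conjI ballI allI)
    show "summable (series_majorant (\<lambda>i. {is. length is = length ks - 1 \<and> sum_list is = i}) (ins_ones ks) a \<rho>)"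
      by (rule series1_majorant_summable[OF ks a(1) \<rho>(1) a(2)])
    show "summable (series_majorant (block_tuples ks) (map2 (\<lambda>k is. k + sum_list is) ks) a \<rho>)"
      by (rule series2_majorant_summable[OF ks a(1) \<rho>(1) a(2)])
    fix \<alpha> l assume "\<alpha> \<in> K"
    show "norm (series1_term ks \<beta> \<alpha> l)
        \<le> series_majorant (\<lambda>i. {is. length is = length ks - 1 \<and> sum_list is = i}) (ins_ones ks) a \<rho> l"
      unfolding series1_term_def
      by (rule norm_series_term_le) (use admissible_ins_ones(1)[OF ks] a Re_ge \<open>\<alpha> \<in> K\<close> \<rho> in auto)
    show "norm (series2_term ks \<beta> \<alpha> l)
        \<le> series_majorant (block_tuples ks) (map2 (\<lambda>k is. k + sum_list is) ks) a \<rho> l"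
      unfolding series2_term_def block_tuples_def[symmetric]
      by (rule norm_series_term_le) (use adm2 a Re_ge \<open>\<alpha> \<in> K\<close> \<rho> in auto)
  qed
qed

theorem lemma3p1:
  fixes ks :: "nat list" and \<beta> :: complex
  assumes "admissible ks" and "Re \<beta> > 0"
  defines "D \<equiv> {\<alpha>::complex. cmod (\<alpha> - \<beta>) < Re \<beta> / 2}"
  shows "(\<forall>\<alpha>\<in>D. summable (\<lambda>l. norm (series1_term ks \<beta> \<alpha> l)))
       \<and> (\<forall>K. compact K \<and> K \<subseteq> D \<longrightarrow>
              uniformly_convergent_on K (\<lambda>N \<alpha>. \<Sum>l<N. series1_term ks \<beta> \<alpha> l))
       \<and> (\<forall>\<alpha>\<in>D. summable (\<lambda>l. norm (series2_term ks \<beta> \<alpha> l)))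
       \<and> (\<forall>K. compact K \<and> K \<subseteq> D \<longrightarrow>
              uniformly_convergent_on K (\<lambda>N \<alpha>. \<Sum>l<N. series2_term ks \<beta> \<alpha> l))"
proof -
  have majorized: "\<exists>M1 M2. summable M1 \<and> summable M2 \<and> (\<forall>\<alpha>\<in>K. \<forall>l.
           norm (series1_term ks \<beta> \<alpha> l) \<le> M1 l \<and> norm (series2_term ks \<beta> \<alpha> l) \<le> M2 l)"
    if "compact K" "K \<subseteq> D" for K
    using series_terms_majorized[OF assms(1,2) that(1)] that(2) by (simp add: D_def)
  have "summable (\<lambda>l. norm (series1_term ks \<beta> \<alpha> l)) \<and> summable (\<lambda>l. norm (series2_term ks \<beta> \<alpha> l))"
    if "\<alpha> \<in> D" for \<alpha>
    using majorized[of "{\<alpha>}"] that by (auto intro: summable_comparison_test'[where N=0])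
  moreover have "uniformly_convergent_on K (\<lambda>N \<alpha>. \<Sum>l<N. series1_term ks \<beta> \<alpha> l)
      \<and> uniformly_convergent_on K (\<lambda>N \<alpha>. \<Sum>l<N. series2_term ks \<beta> \<alpha> l)" if "compact K" "K \<subseteq> D" for K
    using majorized[OF that] by (auto intro!: Weierstrass_m_test')
  ultimately show ?thesis by blast
qed

end
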